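(* (Root Capacity Magnification Theorem.) Let $K$ be a perfect field and let $K\subseteq L\subseteq M$ be finite extensions inside $\bar K$. Let $F/K$ be a finite Galois extension of degree $d$ such that $M'=MF$ is obtained by strong cluster magnification from $M/K$ through $F/K$ and $L'=LF$ is obtained by strong cluster magnification from $L/K$ through $F/K$. Then $\rho_K(M',L')=d\cdot\rho_K(M,L)$.
   Context: $\bar K$ is a fixed algebraic closure of $K$; $\tilde E$ denotes the Galois closure in $\bar K$ of a finite extension $E/K$. A finite extension $M/K$ is obtained by strong cluster magnification from a subextension $L/K$ through a finite Galois extension $F/K$ if $[L:K]>2$, $\tilde L\cap F=K$, and $LF=M$; $d=[F:K]$ is the magnification factor. For finite extensions $L/K$, $M/K$, writing $L=K(\alpha)$ with minimal polynomial $f$ of $\alpha$ over $K$, the root capacity $\rho_K(M,L)$ is the number of roots of $f$ lying in $M$ (independent of the choice of $\alpha$); equivalently $\rho_K(M,L)=a\cdot r_K(L)$, where $a$ is the number of distinct subfields of $M$ isomorphic to $L$ over $K$ and $r_K(L)$ is the number of roots of $f$ in $L$. *)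

theory Defs
  imports "HOL-Computational_Algebra.Polynomial"
begin

text \<open>Ambient field: a type 'a :: field playing the role of the fixed algebraic
closure of K. Subfields of it are sets.\<close>

definition is_subfield :: "'a::field set \<Rightarrow> bool" where
  "is_subfield S \<longleftrightarrow> 0 \<in> S \<and> 1 \<in> S \<and>
     (\<forall>x\<in>S. \<forall>y\<in>S. x + y \<in> S \<and> x * y \<in> S) \<and>
     (\<forall>x\<in>S. - x \<in> S \<and> inverse x \<in> S)"

definition alg_closed :: "'a::field itself \<Rightarrow> bool" where
  "alg_closed _ \<longleftrightarrow> (\<forall>p::'a poly. degree p > 0 \<longrightarrow> (\<exists>x. poly p x = 0))"

definition poly_over :: "'a::field set \<Rightarrow> 'a poly \<Rightarrow> bool" where
  "poly_over K p \<longleftrightarrow> (\<forall>i. coeff p i \<in> K)"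

definition algebraic_over :: "'a::field set \<Rightarrow> 'a \<Rightarrow> bool" where
  "algebraic_over K x \<longleftrightarrow> (\<exists>p. p \<noteq> 0 \<and> poly_over K p \<and> poly p x = 0)"

definition min_poly :: "'a::field set \<Rightarrow> 'a \<Rightarrow> 'a poly" where
  "min_poly K x = (THE p. lead_coeff p = 1 \<and> poly_over K p \<and> poly p x = 0 \<and>
      (\<forall>q. q \<noteq> 0 \<and> poly_over K q \<and> poly q x = 0 \<longrightarrow> degree p \<le> degree q))"

text \<open>Perfect field: characteristic 0, or characteristic p with surjective Frobenius.\<close>
definition perfect_field :: "'a::field set \<Rightarrow> bool" where
  "perfect_field K \<longleftrightarrow> (\<forall>p::nat. prime p \<and> of_nat p = (0::'a) \<longrightarrow>
      (\<forall>x\<in>K. \<exists>y\<in>K. y ^ p = x))"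

definition gen_field :: "'a::field set \<Rightarrow> 'a set" where
  "gen_field S = \<Inter>{T. is_subfield T \<and> S \<subseteq> T}"

definition compositum :: "'a::field set \<Rightarrow> 'a set \<Rightarrow> 'a set" where
  "compositum L F = gen_field (L \<union> F)"

definition is_basis_over :: "'a::field set \<Rightarrow> 'a set \<Rightarrow> 'a set \<Rightarrow> bool" where
  "is_basis_over K L B \<longleftrightarrow> finite B \<and> B \<subseteq> L \<and>
     (\<forall>c. (\<forall>b\<in>B. c b \<in> K) \<and> (\<Sum>b\<in>B. c b * b) = 0 \<longrightarrow> (\<forall>b\<in>B. c b = 0)) \<and>
     L = {\<Sum>b\<in>B. c b * b | c. \<forall>b\<in>B. c b \<in> K}"

definition finite_ext :: "'a::field set \<Rightarrow> 'a set \<Rightarrow> bool" where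
  "finite_ext K L \<longleftrightarrow> is_subfield K \<and> is_subfield L \<and> K \<subseteq> L \<and> (\<exists>B. is_basis_over K L B)"

definition ext_degree :: "'a::field set \<Rightarrow> 'a set \<Rightarrow> nat" where
  "ext_degree K L = (if \<exists>B. is_basis_over K L B then card (SOME B. is_basis_over K L B) else 0)"

definition K_embedding :: "'a::field set \<Rightarrow> 'a set \<Rightarrow> ('a \<Rightarrow> 'a) \<Rightarrow> bool" where
  "K_embedding K L \<sigma> \<longleftrightarrow> (\<forall>x\<in>K. \<sigma> x = x) \<and> \<sigma> 1 = 1 \<and>
     (\<forall>x\<in>L. \<forall>y\<in>L. \<sigma> (x + y) = \<sigma> x + \<sigma> y \<and> \<sigma> (x * y) = \<sigma> x * \<sigma> y)"

definition galois_closure :: "'a::field set \<Rightarrow> 'a set \<Rightarrow> 'a set" where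
  "galois_closure K L = gen_field (K \<union> \<Union>{\<sigma> ` L | \<sigma>. K_embedding K L \<sigma>})"

definition galois_ext :: "'a::field set \<Rightarrow> 'a set \<Rightarrow> bool" where
  "galois_ext K F \<longleftrightarrow> finite_ext K F \<and>
     (\<forall>a\<in>F. \<forall>b. poly (min_poly K a) b = 0 \<longrightarrow> b \<in> F) \<and>
     (\<forall>a\<in>F. rsquarefree (min_poly K a))"

definition strong_cluster_magnification ::
    "'a::field set \<Rightarrow> 'a set \<Rightarrow> 'a set \<Rightarrow> 'a set \<Rightarrow> bool" where
  "strong_cluster_magnification K L F M \<longleftrightarrow>
     finite_ext K L \<and> galois_ext K F \<and> ext_degree K L > 2 \<and>
     galois_closure K L \<inter> F = K \<and> compositum L F = M"

definition root_capacity :: "'a::field set \<Rightarrow> 'a set \<Rightarrow> 'a set \<Rightarrow> nat" where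
  "root_capacity K M L =
     (let \<alpha> = (SOME \<alpha>. \<alpha> \<in> L \<and> gen_field (insert \<alpha> K) = L)
      in card {\<beta>\<in>M. poly (min_poly K \<alpha>) \<beta> = 0})"

end

theory Submission
  imports "HOL-Algebra.Multiplicative_Group" Defs
begin

text \<open>Write \<open>F = K(\<theta>)\<close>, \<open>L = K(\<alpha>)\<close> and \<open>LF = K(\<gamma>)\<close>, and let \<open>f\<close>, \<open>h\<close> be the minimal polynomials
  of \<open>\<alpha>\<close>, \<open>\<theta>\<close> over \<open>K\<close>. Since \<open>F/K\<close> is Galois and meets the Galois closure \<open>N\<close> of \<open>M\<close> only in
  \<open>K\<close>, \<open>h\<close> remains the minimal polynomial of \<open>\<theta>\<close> over \<open>L\<close>, \<open>M\<close> and \<open>N\<close>. Writing \<open>\<alpha> = p\<^sub>\<alpha>(\<gamma>)\<close>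
  and \<open>\<theta> = p\<^sub>\<theta>(\<gamma>)\<close>, the map \<open>\<beta> \<mapsto> (p\<^sub>\<alpha>(\<beta>), p\<^sub>\<theta>(\<beta>))\<close> is therefore a bijection from the
  conjugates of \<open>\<gamma>\<close> onto pairs \<open>(a, t)\<close> of roots of \<open>f\<close> and \<open>h\<close>: surjectivity comes from extending
  \<open>\<alpha> \<mapsto> a\<close> and then \<open>\<theta> \<mapsto> t\<close> to an embedding of \<open>K(\<gamma>)\<close>. A conjugate \<open>\<beta>\<close> lies in
  \<open>MF = M(\<theta>)\<close> iff \<open>a\<close> does, and as \<open>a \<in> N\<close> and \<open>N \<inter> M(\<theta>) = M\<close>, iff \<open>a \<in> M\<close>. Counting gives
  \<open>\<rho>(MF, LF) = \<rho>(M, L) \<cdot> deg h = d \<cdot> \<rho>(M, L)\<close>.\<close>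

section \<open>Subfields and generated subfields\<close>

lemma subfieldD:
  assumes "is_subfield S"
  shows subfield_0: "0 \<in> S" and subfield_1: "1 \<in> S"
    and subfield_add: "\<And>x y. x \<in> S \<Longrightarrow> y \<in> S \<Longrightarrow> x + y \<in> S"
    and subfield_mult: "\<And>x y. x \<in> S \<Longrightarrow> y \<in> S \<Longrightarrow> x * y \<in> S"
    and subfield_uminus: "\<And>x. x \<in> S \<Longrightarrow> - x \<in> S"
    and subfield_inverse: "\<And>x. x \<in> S \<Longrightarrow> inverse x \<in> S"
  using assms unfolding is_subfield_def by auto

lemma subfield_diff: "is_subfield S \<Longrightarrow> x \<in> S \<Longrightarrow> y \<in> S \<Longrightarrow> x - y \<in> S"
  using subfield_add[of S x "- y"] subfield_uminus[of S y] by simp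

lemma subfield_divide: "is_subfield S \<Longrightarrow> x \<in> S \<Longrightarrow> y \<in> S \<Longrightarrow> x / y \<in> S"
  using subfield_mult[of S x "inverse y"] subfield_inverse[of S y] by (simp add: divide_inverse)

lemma subfield_power: "is_subfield S \<Longrightarrow> x \<in> S \<Longrightarrow> x ^ n \<in> S"
  by (induction n) (auto intro: subfield_mult subfield_1)

lemma subfield_sum: "is_subfield S \<Longrightarrow> (\<And>i. i \<in> A \<Longrightarrow> f i \<in> S) \<Longrightarrow> sum f A \<in> S"
  by (induction A rule: infinite_finite_induct) (auto intro: subfield_add subfield_0)

lemma subfield_of_nat: "is_subfield S \<Longrightarrow> of_nat n \<in> S"
  by (induction n) (auto intro: subfield_add subfield_0 subfield_1)

lemma subfield_gen_field: "is_subfield (gen_field S)"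
  unfolding gen_field_def is_subfield_def by auto

lemma gen_field_superset: "S \<subseteq> gen_field S"
  unfolding gen_field_def by auto

lemma gen_field_least: "is_subfield T \<Longrightarrow> S \<subseteq> T \<Longrightarrow> gen_field S \<subseteq> T"
  unfolding gen_field_def by auto

lemma gen_field_mono: "S \<subseteq> T \<Longrightarrow> gen_field S \<subseteq> gen_field T"
  by (meson gen_field_least subfield_gen_field gen_field_superset order_trans)

lemma gen_field_eq_self: "is_subfield S \<Longrightarrow> gen_field S = S"
  by (simp add: gen_field_least gen_field_superset subset_antisym)

lemma gen_field_insert_gen_field: "gen_field (insert b (gen_field S)) = gen_field (insert b S)"
proof
  show "gen_field (insert b (gen_field S)) \<subseteq> gen_field (insert b S)"
    by (metis gen_field_least gen_field_mono subfield_gen_field gen_field_superset insert_mono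
        subset_insertI insert_subset)
  show "gen_field (insert b S) \<subseteq> gen_field (insert b (gen_field S))"
    by (rule gen_field_mono) (use gen_field_superset in blast)
qed

lemma compositum_gen_field_insert:
  assumes "is_subfield L" "K \<subseteq> L"
  shows "compositum L (gen_field (insert \<theta> K)) = gen_field (insert \<theta> L)"
  unfolding compositum_def
proof (rule antisym)
  have "gen_field (insert \<theta> K) \<subseteq> gen_field (insert \<theta> L)"
    using assms(2) by (intro gen_field_mono) auto
  then show "gen_field (L \<union> gen_field (insert \<theta> K)) \<subseteq> gen_field (insert \<theta> L)"
    using gen_field_superset by (intro gen_field_least[OF subfield_gen_field]) blast
  have "insert \<theta> L \<subseteq> L \<union> gen_field (insert \<theta> K)"
    using gen_field_superset by blast
  then show "gen_field (insert \<theta> L) \<subseteq> gen_field (L \<union> gen_field (insert \<theta> K))"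
    by (rule gen_field_mono)
qed

lemma gen_field_insert_eq_superset:
  assumes "is_subfield M" "L \<subseteq> M" "K \<subseteq> L" "M = gen_field (insert \<mu> K)"
  shows "M = gen_field (insert \<mu> L)"
proof
  show "M \<subseteq> gen_field (insert \<mu> L)"
    using assms(3,4) gen_field_mono[of "insert \<mu> K" "insert \<mu> L"] by auto
  have "\<mu> \<in> M"
    using assms(4) gen_field_superset by blast
  then show "gen_field (insert \<mu> L) \<subseteq> M"
    using assms(1,2) by (intro gen_field_least) auto
qed


section \<open>Polynomials over a subfield\<close>

lemma poly_overD: "poly_over K p \<Longrightarrow> coeff p i \<in> K"
  unfolding poly_over_def by auto

lemma poly_over_mono: "poly_over K p \<Longrightarrow> K \<subseteq> E \<Longrightarrow> poly_over E p"
  unfolding poly_over_def by auto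

lemma poly_over_0: "is_subfield K \<Longrightarrow> poly_over K 0"
  unfolding poly_over_def by (auto intro: subfield_0)

lemma poly_over_const: "is_subfield K \<Longrightarrow> c \<in> K \<Longrightarrow> poly_over K [:c:]"
  unfolding poly_over_def by (auto intro: subfield_0 simp: coeff_pCons split: nat.split)

lemma poly_over_pCons_iff: "poly_over K (pCons c p) \<longleftrightarrow> c \<in> K \<and> poly_over K p"
  unfolding poly_over_def by (metis coeff_pCons_0 coeff_pCons_Suc not0_implies_Suc)

lemma poly_over_add: "is_subfield K \<Longrightarrow> poly_over K p \<Longrightarrow> poly_over K q \<Longrightarrow> poly_over K (p + q)"
  unfolding poly_over_def by (auto intro: subfield_add)

lemma poly_over_uminus: "is_subfield K \<Longrightarrow> poly_over K p \<Longrightarrow> poly_over K (- p)"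
  unfolding poly_over_def by (auto intro: subfield_uminus)

lemma poly_over_diff: "is_subfield K \<Longrightarrow> poly_over K p \<Longrightarrow> poly_over K q \<Longrightarrow> poly_over K (p - q)"
  unfolding poly_over_def by (auto intro: subfield_diff)

lemma poly_over_smult: "is_subfield K \<Longrightarrow> c \<in> K \<Longrightarrow> poly_over K p \<Longrightarrow> poly_over K (smult c p)"
  unfolding poly_over_def by (auto intro: subfield_mult)

lemma poly_over_mult: "is_subfield K \<Longrightarrow> poly_over K p \<Longrightarrow> poly_over K q \<Longrightarrow> poly_over K (p * q)"
  unfolding poly_over_def by (auto simp: coeff_mult intro!: subfield_sum subfield_mult)

lemma poly_over_1: "is_subfield K \<Longrightarrow> poly_over K 1"
  using poly_over_const[of K 1] by (simp add: subfield_1 one_pCons)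

lemma poly_over_X: "is_subfield K \<Longrightarrow> poly_over K [:0, 1:]"
  by (simp add: poly_over_pCons_iff subfield_0 subfield_1 poly_over_0)

lemma poly_over_power: "is_subfield K \<Longrightarrow> poly_over K p \<Longrightarrow> poly_over K (p ^ n)"
  by (induction n) (auto intro: poly_over_mult poly_over_1)

lemma poly_over_sum:
  "is_subfield K \<Longrightarrow> (\<And>i. i \<in> A \<Longrightarrow> poly_over K (f i)) \<Longrightarrow> poly_over K (sum f A)"
  by (induction A rule: infinite_finite_induct) (auto intro: poly_over_add poly_over_0)

lemma poly_over_monom: "is_subfield K \<Longrightarrow> c \<in> K \<Longrightarrow> poly_over K (monom c n)"
  unfolding poly_over_def by (auto simp: coeff_monom intro: subfield_0)

lemma poly_over_pcompose:
  "is_subfield K \<Longrightarrow> poly_over K p \<Longrightarrow> poly_over K q \<Longrightarrow> poly_over K (pcompose p q)"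
  by (induction p)
    (auto simp: pcompose_pCons poly_over_pCons_iff poly_over_0
      intro!: poly_over_add poly_over_const poly_over_mult)

lemma poly_over_pderiv: "is_subfield K \<Longrightarrow> poly_over K p \<Longrightarrow> poly_over K (pderiv p)"
  unfolding poly_over_def coeff_pderiv by (metis subfield_mult subfield_of_nat)

lemma poly_in_subfield: "is_subfield K \<Longrightarrow> poly_over K p \<Longrightarrow> x \<in> K \<Longrightarrow> poly p x \<in> K"
  by (induction p) (auto simp: poly_over_pCons_iff intro!: subfield_add subfield_mult subfield_0)

lemma poly_over_divmod_exists:
  assumes K: "is_subfield K" and q: "poly_over K q" "q \<noteq> 0" and p: "poly_over K p"
  shows "\<exists>s r. poly_over K s \<and> poly_over K r \<and> p = q * s + r \<and> (r = 0 \<or> degree r < degree q)"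
  using p
proof (induction "degree p" arbitrary: p rule: less_induct)
  case less
  show ?case
  proof (cases "p = 0 \<or> degree p < degree q")
    case True
    then show ?thesis
      using less.prems K by (intro exI[of _ 0] exI[of _ p]) (auto simp: poly_over_0)
  next
    case False
    define t where "t = monom (lead_coeff p / lead_coeff q) (degree p - degree q)"
    \<comment> \<open>subtracting \<open>q * t\<close> cancels the leading term of \<open>p\<close>\<close>
    have tK: "poly_over K t"
      unfolding t_def using K q less.prems by (auto intro!: poly_over_monom subfield_divide poly_overD)
    have c0: "lead_coeff p / lead_coeff q \<noteq> 0"
      using False q(2) by auto
    have dqt: "degree (q * t) = degree p"
      using False q(2) c0 by (simp add: t_def degree_mult_eq degree_monom_eq)
    have lqt: "lead_coeff (q * t) = lead_coeff p"
      unfolding lead_coeff_mult using q(2) c0 by (simp add: t_def degree_monom_eq)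
    have "p - q * t \<noteq> 0 \<longrightarrow> degree (p - q * t) < degree p"
    proof
      assume "p - q * t \<noteq> 0"
      moreover have "degree (p - q * t) \<le> degree p"
        using dqt by (simp add: degree_diff_le)
      moreover have "coeff (p - q * t) (degree p) = 0"
        using dqt lqt by simp
      ultimately show "degree (p - q * t) < degree p"
        by (metis le_neq_implies_less leading_coeff_0_iff)
    qed
    moreover have "poly_over K (p - q * t)"
      using K less.prems q tK by (auto intro: poly_over_diff poly_over_mult)
    ultimately obtain s r where sr: "poly_over K s" "poly_over K r" "p - q * t = q * s + r"
        "r = 0 \<or> degree r < degree q"
      using less(1) K by (metis add.right_neutral mult_zero_right poly_over_0)
    then have "p = q * (s + t) + r"
      by (simp add: algebra_simps)
    then show ?thesis
      using sr K tK by (intro exI[of _ "s + t"] exI[of _ r]) (auto intro: poly_over_add)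
  qed
qed

lemma poly_over_div_mod:
  assumes K: "is_subfield K" and q: "poly_over K q" and p: "poly_over K p"
  shows poly_over_div: "poly_over K (p div q)" and poly_over_mod: "poly_over K (p mod q)"
proof -
  have "poly_over K (p div q) \<and> poly_over K (p mod q)"
  proof (cases "q = 0")
    case True
    then show ?thesis using p K by (simp add: poly_over_0)
  next
    case False
    then obtain s r where sr: "poly_over K s" "poly_over K r" "p = q * s + r"
        "r = 0 \<or> degree r < degree q"
      using poly_over_divmod_exists[OF K q _ p] by blast
    have "(p div q, p mod q) = (s, r)"
    proof (induction rule: euclidean_relation_polyI)
      case divides
      then have "q dvd r"
        using sr(3) by (metis dvd_add_right_iff dvd_triv_left)
      then show ?case
        using sr(3,4) divides by (auto dest: dvd_imp_degree_le simp: mult.commute)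
    qed (use False sr in \<open>auto simp: mult.commute\<close>)
    then show ?thesis
      using sr by simp
  qed
  then show "poly_over K (p div q)" "poly_over K (p mod q)"
    by auto
qed

section \<open>Minimal polynomials\<close>

definition is_min_poly :: "'a::field set \<Rightarrow> 'a \<Rightarrow> 'a poly \<Rightarrow> bool" where
  "is_min_poly E x p \<longleftrightarrow> lead_coeff p = 1 \<and> poly_over E p \<and> poly p x = 0 \<and>
      (\<forall>q. q \<noteq> 0 \<and> poly_over E q \<and> poly q x = 0 \<longrightarrow> degree p \<le> degree q)"

lemma is_min_poly_unique:
  assumes E: "is_subfield E" and p1: "is_min_poly E x p1" and p2: "is_min_poly E x p2"
  shows "p1 = p2"
proof (rule ccontr)
  assume "p1 \<noteq> p2"
  then have r0: "p1 - p2 \<noteq> 0"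
    by simp
  have "p1 \<noteq> 0" "p2 \<noteq> 0"
    using p1 p2 unfolding is_min_poly_def by auto
  then have deq: "degree p1 = degree p2"
    using p1 p2 unfolding is_min_poly_def by (meson le_antisym)
  have "degree p1 \<le> degree (p1 - p2)"
    using p1 p2 E r0 unfolding is_min_poly_def by (simp add: poly_over_diff)
  moreover have "degree (p1 - p2) \<le> degree p1"
    using deq by (simp add: degree_diff_le)
  moreover have "coeff (p1 - p2) (degree p1) = 0"
    using p1 p2 deq unfolding is_min_poly_def by simp
  ultimately show False
    using r0 by (metis le_antisym leading_coeff_0_iff)
qed

lemma is_min_poly_exists:
  assumes E: "is_subfield E" and alg: "algebraic_over E x"
  shows "\<exists>p. is_min_poly E x p"
proof -
  define P where "P n \<longleftrightarrow> (\<exists>q. q \<noteq> 0 \<and> poly_over E q \<and> poly q x = 0 \<and> degree q = n)" for n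
  have "\<exists>n. P n"
    using alg unfolding algebraic_over_def P_def by blast
  then have "P (LEAST n. P n)"
    by (rule LeastI_ex)
  then obtain q where q: "q \<noteq> 0" "poly_over E q" "poly q x = 0" "degree q = (LEAST n. P n)"
    unfolding P_def by blast
  have least: "degree q \<le> degree r" if "r \<noteq> 0" "poly_over E r" "poly r x = 0" for r
    using q(4) that by (auto simp: P_def intro: Least_le)
  define p where "p = smult (inverse (lead_coeff q)) q"
  have "lead_coeff q \<noteq> 0"
    using q(1) by simp
  then have "is_min_poly E x p"
    unfolding is_min_poly_def p_def using E q(2,3) least
    by (auto intro!: poly_over_smult subfield_inverse poly_overD)
  then show ?thesis ..
qed

lemma min_poly_is_min_poly:
  assumes E: "is_subfield E" and alg: "algebraic_over E x"
  shows "is_min_poly E x (min_poly E x)"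
proof -
  obtain p where p: "is_min_poly E x p"
    using is_min_poly_exists[OF E alg] by blast
  have "min_poly E x = (THE p. is_min_poly E x p)"
    unfolding min_poly_def is_min_poly_def by simp
  also have "\<dots> = p"
    using p is_min_poly_unique[OF E _ p] by (rule the_equality)
  finally show ?thesis
    using p by simp
qed

lemma min_poly_eqI:
  assumes E: "is_subfield E" and p: "is_min_poly E x p"
  shows "min_poly E x = p"
proof -
  have "p \<noteq> 0"
    using p unfolding is_min_poly_def by auto
  then have "algebraic_over E x"
    using p unfolding is_min_poly_def algebraic_over_def by blast
  then show ?thesis
    using is_min_poly_unique[OF E min_poly_is_min_poly[OF E] p] by blast
qed

lemma min_poly:
  assumes E: "is_subfield E" and alg: "algebraic_over E x"
  shows min_poly_monic: "lead_coeff (min_poly E x) = 1"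
    and min_poly_over: "poly_over E (min_poly E x)"
    and min_poly_root: "poly (min_poly E x) x = 0"
    and min_poly_minimal:
      "\<And>q. q \<noteq> 0 \<Longrightarrow> poly_over E q \<Longrightarrow> poly q x = 0 \<Longrightarrow> degree (min_poly E x) \<le> degree q"
  using min_poly_is_min_poly[OF E alg] unfolding is_min_poly_def by auto

lemma min_poly_nonzero: "is_subfield E \<Longrightarrow> algebraic_over E x \<Longrightarrow> min_poly E x \<noteq> 0"
  using min_poly_monic[of E x] by auto

lemma degree_min_poly_pos:
  assumes E: "is_subfield E" and alg: "algebraic_over E x"
  shows "degree (min_poly E x) > 0"
proof (rule ccontr)
  assume "\<not> ?thesis"
  then have "min_poly E x = 1"
    using min_poly_monic[OF E alg] by (metis degree_0_id neq0_conv one_pCons)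
  then show False
    using min_poly_root[OF E alg] by simp
qed

lemma min_poly_dvd:
  assumes E: "is_subfield E" and alg: "algebraic_over E x"
    and q: "poly_over E q" "poly q x = 0"
  shows "min_poly E x dvd q"
proof -
  let ?m = "min_poly E x"
  have rE: "poly_over E (q mod ?m)"
    using poly_over_mod[OF E min_poly_over[OF E alg] q(1)] .
  have "poly q x = poly (?m * (q div ?m)) x + poly (q mod ?m) x"
    by (metis div_mult_mod_eq mult.commute poly_add)
  then have rx: "poly (q mod ?m) x = 0"
    using q min_poly_root[OF E alg] by simp
  have "q mod ?m = 0"
  proof (rule ccontr)
    assume nz: "q mod ?m \<noteq> 0"
    then have "degree (q mod ?m) < degree ?m"
      using degree_mod_less[OF min_poly_nonzero[OF E alg]] by auto
    then show False
      using min_poly_minimal[OF E alg nz rE rx] by simp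
  qed
  then show ?thesis
    by (simp add: mod_eq_0_iff_dvd)
qed

lemma poly_eq_0_at_conjugate:
  assumes K: "is_subfield K" and alg: "algebraic_over K x" and q: "poly_over K q" "poly q x = 0"
    and y: "poly (min_poly K x) y = 0"
  shows "poly q y = 0"
  using min_poly_dvd[OF K alg q] y by (metis dvd_def mult_zero_left poly_mult)

lemma algebraic_over_mono: "algebraic_over K x \<Longrightarrow> K \<subseteq> E \<Longrightarrow> algebraic_over E x"
  unfolding algebraic_over_def using poly_over_mono by blast

lemma min_poly_eq_if_poly_over:
  assumes K: "is_subfield K" and E: "is_subfield E" and KE: "K \<subseteq> E"
    and alg: "algebraic_over K x" and over: "poly_over K (min_poly E x)"
  shows "min_poly E x = min_poly K x"
proof -
  have algE: "algebraic_over E x"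
    using algebraic_over_mono[OF alg KE] .
  have "is_min_poly K x (min_poly E x)"
    unfolding is_min_poly_def
    using min_poly[OF E algE] over poly_over_mono[OF _ KE] by (simp add: min_poly_minimal[OF E algE])
  then show ?thesis
    using min_poly_eqI[OF K] by metis
qed

lemma min_poly_of_conjugate:
  assumes K: "is_subfield K" and alg: "algebraic_over K x" and r: "poly (min_poly K x) r = 0"
  shows "min_poly K r = min_poly K x"
proof -
  let ?f = "min_poly K x"
  have algr: "algebraic_over K r"
    unfolding algebraic_over_def using min_poly_nonzero[OF K alg] min_poly_over[OF K alg] r by blast
  let ?m = "min_poly K r"
  obtain s where s: "?f = ?m * s"
    using min_poly_dvd[OF K algr min_poly_over[OF K alg] r] by blast
  have sK: "poly_over K s"
    using s poly_over_div[OF K min_poly_over[OF K algr] min_poly_over[OF K alg]]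
    by (simp add: min_poly_nonzero[OF K algr])
  have m0: "?m \<noteq> 0" and s0: "s \<noteq> 0"
    using s min_poly_nonzero[OF K alg] by auto
  then have dsum: "degree ?f = degree ?m + degree s"
    using s by (simp add: degree_mult_eq)
  \<comment> \<open>one factor vanishes at \<open>x\<close>, so by minimality of \<open>?f\<close> the other one is constant\<close>
  have "poly ?m x = 0 \<or> poly s x = 0"
    using min_poly_root[OF K alg] s by simp
  then show ?thesis
  proof
    assume "poly ?m x = 0"
    then have "degree s = 0"
      using min_poly_minimal[OF K alg m0 min_poly_over[OF K algr]] dsum by simp
    then obtain c where c: "s = [:c:]"
      by (metis degree_0_id)
    have "lead_coeff ?f = lead_coeff ?m * lead_coeff s"
      unfolding s by (rule lead_coeff_mult)
    then have "c = 1"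
      using c min_poly_monic[OF K alg] min_poly_monic[OF K algr] by simp
    then show ?thesis
      using s c by simp
  next
    assume "poly s x = 0"
    then have "degree ?m = 0"
      using min_poly_minimal[OF K alg s0 sK] dsum by simp
    then show ?thesis
      using degree_min_poly_pos[OF K algr] by simp
  qed
qed

section \<open>Simple extensions\<close>

lemma inverse_eq_poly:
  assumes E: "is_subfield E" and alg: "algebraic_over E y" and y0: "y \<noteq> 0"
  shows "\<exists>r. poly_over E r \<and> inverse y = poly r y"
proof -
  let ?m = "min_poly E y"
  obtain a m1 where m: "?m = pCons a m1"
    by (cases "?m") auto
  then have aE: "a \<in> E" and m1E: "poly_over E m1"
    using min_poly_over[OF E alg] poly_over_pCons_iff by metis+
  have root: "a + y * poly m1 y = 0"
    using min_poly_root[OF E alg] m by simp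
  \<comment> \<open>\<open>a = 0\<close> would make \<open>m1\<close> a polynomial of smaller degree vanishing at \<open>y\<close>\<close>
  have a0: "a \<noteq> 0"
  proof
    assume a: "a = 0"
    then have "m1 \<noteq> 0"
      using min_poly_nonzero[OF E alg] m by auto
    moreover have "poly m1 y = 0"
      using root y0 a by simp
    ultimately have "degree ?m \<le> degree m1"
      using min_poly_minimal[OF E alg _ m1E] by blast
    then show False
      using m \<open>m1 \<noteq> 0\<close> by simp
  qed
  have "inverse y = poly (smult (- inverse a) m1) y"
    using root a0 y0 by (simp add: field_simps add_eq_0_iff)
  moreover have "poly_over E (smult (- inverse a) m1)"
    using E aE m1E by (intro poly_over_smult subfield_uminus subfield_inverse)
  ultimately show ?thesis
    by blast
qed

lemma gen_field_insert_eq_polys: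
  assumes E: "is_subfield E" and alg: "\<forall>z. algebraic_over E z"
  shows "gen_field (insert x E) = {poly p x | p. poly_over E p}"
proof
  let ?S = "{poly p x | p. poly_over E p}"
  have inS: "poly p x \<in> ?S" if "poly_over E p" for p
    using that by blast
  have inverse: "inverse a \<in> ?S" if "a \<in> ?S" for a
  proof (cases "a = 0")
    case False
    obtain p where p: "poly_over E p" "a = poly p x"
      using \<open>a \<in> ?S\<close> by blast
    obtain r where r: "poly_over E r" "inverse a = poly r a"
      using inverse_eq_poly[OF E _ False] alg by blast
    then show ?thesis
      using p inS[OF poly_over_pcompose[OF E r(1) p(1)]] by (simp add: poly_pcompose)
  qed (use inS[OF poly_over_0[OF E]] in simp)
  have closed: "a + b \<in> ?S" "a * b \<in> ?S" "- a \<in> ?S" if ab: "a \<in> ?S" "b \<in> ?S" for a b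
  proof -
    obtain p q where "poly_over E p" "a = poly p x" "poly_over E q" "b = poly q x"
      using ab by blast
    then show "a + b \<in> ?S" "a * b \<in> ?S" "- a \<in> ?S"
      using inS[OF poly_over_add[OF E]] inS[OF poly_over_mult[OF E]] inS[OF poly_over_uminus[OF E]]
      by force+
  qed
  have "is_subfield ?S"
    unfolding is_subfield_def
    using inS[OF poly_over_0[OF E]] inS[OF poly_over_1[OF E]] inverse closed by simp
  moreover have "insert x E \<subseteq> ?S"
    using inS[OF poly_over_X[OF E]] inS[OF poly_over_const[OF E]] by force
  ultimately show "gen_field (insert x E) \<subseteq> ?S"
    by (rule gen_field_least)
  have "E \<subseteq> gen_field (insert x E)" "x \<in> gen_field (insert x E)"
    using gen_field_superset by blast+
  then show "?S \<subseteq> gen_field (insert x E)"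
    using poly_in_subfield[OF subfield_gen_field poly_over_mono] by blast
qed

lemma poly_mod_min_poly:
  assumes E: "is_subfield E" and alg: "algebraic_over E x" and p: "poly_over E p"
  shows "poly_over E (p mod min_poly E x)" and "poly (p mod min_poly E x) x = poly p x"
    and "p mod min_poly E x = 0 \<or> degree (p mod min_poly E x) < degree (min_poly E x)"
proof -
  let ?m = "min_poly E x"
  have "poly p x = poly (?m * (p div ?m)) x + poly (p mod ?m) x"
    by (metis div_mult_mod_eq mult.commute poly_add)
  then show "poly_over E (p mod ?m)" "poly (p mod ?m) x = poly p x"
    "p mod ?m = 0 \<or> degree (p mod ?m) < degree ?m"
    using poly_over_mod[OF E min_poly_over[OF E alg] p] min_poly_root[OF E alg]
      degree_mod_less[OF min_poly_nonzero[OF E alg]] by auto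
qed


section \<open>Roots in an algebraically closed field\<close>

lemma alg_closedD: "alg_closed TYPE('a::field) \<Longrightarrow> degree (p::'a poly) > 0 \<Longrightarrow> \<exists>x. poly p x = 0"
  unfolding alg_closed_def by blast

lemma alg_closed_linear_factor:
  fixes p :: "'a::field poly"
  assumes ac: "alg_closed TYPE('a)" and "degree p > 0"
  obtains r q where "p = [:-r, 1:] * q" "degree p = Suc (degree q)" "lead_coeff q = lead_coeff p"
proof -
  obtain r where "poly p r = 0"
    using alg_closedD[OF assms] by blast
  then obtain q where q: "p = [:-r, 1:] * q"
    using poly_eq_0_iff_dvd by blast
  have "q \<noteq> 0"
    using q assms(2) by auto
  then have dq: "degree ([:-r, 1:] * q) = Suc (degree q)"
    by (subst degree_mult_eq) auto
  have lq: "lead_coeff ([:-r, 1:] * q) = lead_coeff q"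
    by (simp only: lead_coeff_mult) simp
  show ?thesis
  proof (rule that[OF q])
    show "degree p = Suc (degree q)" "lead_coeff q = lead_coeff p"
      using q dq lq by (simp_all only:)
  qed
qed

lemma poly_over_if_roots_in:
  fixes p :: "'a::field poly"
  assumes ac: "alg_closed TYPE('a)" and F: "is_subfield F"
  shows "lead_coeff p = 1 \<Longrightarrow> (\<And>r. poly p r = 0 \<Longrightarrow> r \<in> F) \<Longrightarrow> poly_over F p"
proof (induction "degree p" arbitrary: p rule: less_induct)
  case less
  show ?case
  proof (cases "degree p = 0")
    case True
    then have "p = 1"
      using less.prems(1) by (metis degree_0_id one_pCons)
    then show ?thesis
      using poly_over_1[OF F] by simp
  next
    case False
    then obtain r q where q: "p = [:-r, 1:] * q" "degree p = Suc (degree q)"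
        "lead_coeff q = lead_coeff p"
      using alg_closed_linear_factor[OF ac] by blast
    have "poly_over F q"
    proof (rule less(1))
      show "degree q < degree p" "lead_coeff q = 1"
        using q(2,3) less.prems(1) by simp_all
      show "s \<in> F" if "poly q s = 0" for s
        using less.prems(2)[of s] q(1) that by simp
    qed
    moreover have "r \<in> F"
      using less.prems(2)[of r] q(1) by simp
    ultimately show ?thesis
      unfolding q(1) using F
      by (intro poly_over_mult) (simp_all add: poly_over_pCons_iff poly_over_0 subfield_1 subfield_uminus)
  qed
qed

lemma rsquarefree_linear_factor:
  assumes "rsquarefree ([:-r, 1:] * q)"
  shows "rsquarefree q" and "poly q r \<noteq> 0"
proof -
  have q0: "q \<noteq> 0"
    using assms unfolding rsquarefree_def by auto
  have ord: "order a ([:-r, 1:] * q) = order a [:-r, 1:] + order a q" for a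
    using q0 by (metis order_mult mult_eq_0_iff pCons_eq_0_iff one_neq_zero)
  have "order r [:-r, 1:] = 1"
    using order_power_n_n[of r 1] by simp
  moreover have "order r ([:-r, 1:] * q) \<le> 1"
    using assms unfolding rsquarefree_def by (metis le_refl zero_le_one)
  ultimately have "order r q = 0"
    using ord[of r] by simp
  then show "poly q r \<noteq> 0"
    using q0 order_root by blast
  have "order a q \<le> 1" for a
    using assms ord[of a] unfolding rsquarefree_def by (metis le_add2 le_refl le_trans zero_le_one)
  then show "rsquarefree q"
    using q0 unfolding rsquarefree_def by (metis le_neq_implies_less less_one)
qed

lemma card_roots_rsquarefree:
  fixes p :: "'a::field poly"
  assumes ac: "alg_closed TYPE('a)"
  shows "rsquarefree p \<Longrightarrow> card {x. poly p x = 0} = degree p"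
proof (induction "degree p" arbitrary: p rule: less_induct)
  case less
  have p0: "p \<noteq> 0"
    using less.prems unfolding rsquarefree_def by auto
  show ?case
  proof (cases "degree p = 0")
    case True
    then obtain c where "p = [:c:]"
      by (metis degree_0_id)
    then show ?thesis
      using p0 True by simp
  next
    case False
    then obtain r q where q: "p = [:-r, 1:] * q" "degree p = Suc (degree q)"
      using alg_closed_linear_factor[OF ac] by blast
    then have q0: "q \<noteq> 0" and sq: "rsquarefree q" and "poly q r \<noteq> 0"
      using rsquarefree_linear_factor less.prems p0 by auto
    moreover have "{x. poly p x = 0} = insert r {x. poly q x = 0}"
      using q(1) by auto
    ultimately have "card {x. poly p x = 0} = Suc (card {x. poly q x = 0})"
      using poly_roots_finite[OF q0] by simp
    then show ?thesis
      using less(1)[OF _ sq] q(2) by simp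
  qed
qed


section \<open>Homomorphisms on subfields\<close>

definition hom_on :: "'a::field set \<Rightarrow> ('a \<Rightarrow> 'a) \<Rightarrow> bool" where
  "hom_on E \<tau> \<longleftrightarrow> \<tau> 1 = 1 \<and> (\<forall>a\<in>E. \<forall>b\<in>E. \<tau> (a + b) = \<tau> a + \<tau> b \<and> \<tau> (a * b) = \<tau> a * \<tau> b)"

lemma hom_on_id: "hom_on E id"
  unfolding hom_on_def by simp

context
  fixes E :: "'a::field set" and \<tau> :: "'a \<Rightarrow> 'a"
  assumes E: "is_subfield E" and h: "hom_on E \<tau>"
begin

lemma hom_1: "\<tau> 1 = 1"
  using h unfolding hom_on_def by auto

lemma hom_add: "a \<in> E \<Longrightarrow> b \<in> E \<Longrightarrow> \<tau> (a + b) = \<tau> a + \<tau> b"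
  using h unfolding hom_on_def by auto

lemma hom_mult: "a \<in> E \<Longrightarrow> b \<in> E \<Longrightarrow> \<tau> (a * b) = \<tau> a * \<tau> b"
  using h unfolding hom_on_def by auto

lemma hom_0: "\<tau> 0 = 0"
proof -
  have "\<tau> 0 = \<tau> 0 + \<tau> 0"
    using hom_add[OF subfield_0[OF E] subfield_0[OF E]] by simp
  then show ?thesis
    by (metis add_cancel_right_right)
qed

lemma hom_uminus: "a \<in> E \<Longrightarrow> \<tau> (- a) = - \<tau> a"
proof -
  assume a: "a \<in> E"
  have "\<tau> a + \<tau> (- a) = 0"
    using hom_add[OF a subfield_uminus[OF E a]] hom_0 by simp
  then show ?thesis
    by (simp add: eq_neg_iff_add_eq_0 add.commute)
qed

lemma hom_diff: "a \<in> E \<Longrightarrow> b \<in> E \<Longrightarrow> \<tau> (a - b) = \<tau> a - \<tau> b"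
  using hom_add[of a "- b"] hom_uminus[of b] subfield_uminus[OF E, of b] by simp

lemma hom_sum: "(\<And>i. i \<in> A \<Longrightarrow> f i \<in> E) \<Longrightarrow> \<tau> (sum f A) = (\<Sum>i\<in>A. \<tau> (f i))"
  by (induction A rule: infinite_finite_induct) (simp_all add: hom_0 hom_add subfield_sum[OF E])

lemma hom_eq_0_iff: "a \<in> E \<Longrightarrow> \<tau> a = 0 \<longleftrightarrow> a = 0"
proof
  assume a: "a \<in> E" "\<tau> a = 0"
  have "\<tau> (a * inverse a) = \<tau> a * \<tau> (inverse a)"
    using hom_mult[OF a(1) subfield_inverse[OF E a(1)]] .
  then show "a = 0"
    using a(2) hom_1 by (cases "a = 0") simp_all
qed (simp add: hom_0)

lemma coeff_map_hom: "coeff (map_poly \<tau> p) n = \<tau> (coeff p n)"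
  by (simp add: coeff_map_poly hom_0)

lemma map_hom_add:
  "poly_over E p \<Longrightarrow> poly_over E q \<Longrightarrow> map_poly \<tau> (p + q) = map_poly \<tau> p + map_poly \<tau> q"
  by (rule poly_eqI) (simp add: coeff_map_hom hom_add poly_overD)

lemma map_hom_diff:
  "poly_over E p \<Longrightarrow> poly_over E q \<Longrightarrow> map_poly \<tau> (p - q) = map_poly \<tau> p - map_poly \<tau> q"
  by (rule poly_eqI) (simp add: coeff_map_hom hom_diff poly_overD)

lemma map_hom_mult:
  assumes p: "poly_over E p" and q: "poly_over E q"
  shows "map_poly \<tau> (p * q) = map_poly \<tau> p * map_poly \<tau> q"
proof (rule poly_eqI)
  fix n
  have "coeff (map_poly \<tau> (p * q)) n = \<tau> (\<Sum>i\<le>n. coeff p i * coeff q (n - i))"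
    by (simp add: coeff_map_hom coeff_mult)
  also have "\<dots> = (\<Sum>i\<le>n. \<tau> (coeff p i) * \<tau> (coeff q (n - i)))"
    using p q by (simp add: hom_sum hom_mult poly_overD subfield_mult[OF E])
  also have "\<dots> = coeff (map_poly \<tau> p * map_poly \<tau> q) n"
    by (simp add: coeff_map_hom coeff_mult)
  finally show "coeff (map_poly \<tau> (p * q)) n = coeff (map_poly \<tau> p * map_poly \<tau> q) n" .
qed

lemma poly_hom: "poly_over E p \<Longrightarrow> z \<in> E \<Longrightarrow> \<tau> (poly p z) = poly (map_poly \<tau> p) (\<tau> z)"
proof (induction p)
  case (pCons a p)
  then have "a \<in> E" "poly_over E p"
    using poly_over_pCons_iff by auto
  then show ?case
    using pCons
    by (simp add: hom_add hom_mult subfield_mult[OF E] poly_in_subfield[OF E] map_poly_pCons hom_0)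
qed (simp add: hom_0)

lemma degree_map_hom:
  assumes p: "poly_over E p"
  shows "degree (map_poly \<tau> p) = degree p"
proof (cases "p = 0")
  case False
  have "degree (map_poly \<tau> p) \<le> degree p"
    by (rule degree_le) (simp add: coeff_map_hom coeff_eq_0 hom_0)
  moreover have "coeff (map_poly \<tau> p) (degree p) \<noteq> 0"
    using False hom_eq_0_iff[OF poly_overD[OF p]] by (simp add: coeff_map_hom)
  then have "degree p \<le> degree (map_poly \<tau> p)"
    by (rule le_degree)
  ultimately show ?thesis
    by simp
qed simp

lemma map_hom_fix: "K \<subseteq> E \<Longrightarrow> (\<forall>a\<in>K. \<tau> a = a) \<Longrightarrow> poly_over K p \<Longrightarrow> map_poly \<tau> p = p"
  by (rule poly_eqI) (simp add: coeff_map_hom poly_overD)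

lemma poly_hom_fix:
  "K \<subseteq> E \<Longrightarrow> (\<forall>a\<in>K. \<tau> a = a) \<Longrightarrow> poly_over K p \<Longrightarrow> z \<in> E \<Longrightarrow> \<tau> (poly p z) = poly p (\<tau> z)"
  using poly_hom[OF poly_over_mono] map_hom_fix by metis

lemma poly_map_hom_eq_if_poly_eq:
  assumes alg: "algebraic_over E x" and y: "poly (map_poly \<tau> (min_poly E x)) y = 0"
    and p: "poly_over E p" and q: "poly_over E q" and eq: "poly p x = poly q x"
  shows "poly (map_poly \<tau> p) y = poly (map_poly \<tau> q) y"
proof -
  let ?m = "min_poly E x"
  have dE: "poly_over E (p - q)"
    using poly_over_diff[OF E p q] .
  have "?m dvd p - q"
    using min_poly_dvd[OF E alg dE] eq by simp
  then have d: "p - q = ?m * ((p - q) div ?m)"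
    by simp
  have "map_poly \<tau> p - map_poly \<tau> q = map_poly \<tau> (p - q)"
    using map_hom_diff[OF p q] by simp
  also have "\<dots> = map_poly \<tau> ?m * map_poly \<tau> ((p - q) div ?m)"
    by (subst d) (rule map_hom_mult[OF min_poly_over[OF E alg] poly_over_div[OF E min_poly_over[OF E alg] dE]])
  finally show ?thesis
    using y by (metis mult_zero_left poly_diff poly_mult right_minus_eq)
qed

end

text \<open>The extension is \<open>\<sigma> (p(x)) = p\<^sup>\<tau>(y)\<close>, well defined by the previous lemma.\<close>

lemma hom_on_extend:
  assumes E: "is_subfield E" and alg: "\<forall>z. algebraic_over E z" and h: "hom_on E \<tau>"
    and y: "poly (map_poly \<tau> (min_poly E x)) y = 0"
  obtains \<sigma> where "hom_on (gen_field (insert x E)) \<sigma>" "\<forall>a\<in>E. \<sigma> a = \<tau> a" "\<sigma> x = y"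
proof -
  define \<sigma> where "\<sigma> z = poly (map_poly \<tau> (SOME p. poly_over E p \<and> poly p x = z)) y" for z
  have S: "gen_field (insert x E) = {poly p x | p. poly_over E p}"
    using gen_field_insert_eq_polys[OF E alg] .
  have \<sigma>_poly: "\<sigma> (poly p x) = poly (map_poly \<tau> p) y" if p: "poly_over E p" for p
  proof -
    have "\<exists>q. poly_over E q \<and> poly q x = poly p x"
      using p by blast
    then have "poly_over E (SOME q. poly_over E q \<and> poly q x = poly p x) \<and>
        poly (SOME q. poly_over E q \<and> poly q x = poly p x) x = poly p x"
      by (rule someI_ex)
    then show ?thesis
      unfolding \<sigma>_def using poly_map_hom_eq_if_poly_eq[OF E h _ y _ p] alg by blast
  qed
  have "hom_on (gen_field (insert x E)) \<sigma>"
    unfolding hom_on_def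
  proof (intro conjI ballI)
    show "\<sigma> 1 = 1"
      using \<sigma>_poly[OF poly_over_1[OF E]] hom_1[OF E h] by (simp add: map_poly_1)
    fix a b assume "a \<in> gen_field (insert x E)" "b \<in> gen_field (insert x E)"
    then obtain p q where p: "poly_over E p" "a = poly p x" and q: "poly_over E q" "b = poly q x"
      unfolding S by blast
    show "\<sigma> (a + b) = \<sigma> a + \<sigma> b"
      using p q \<sigma>_poly[OF poly_over_add[OF E p(1) q(1)]] \<sigma>_poly map_hom_add[OF E h p(1) q(1)]
      by simp
    show "\<sigma> (a * b) = \<sigma> a * \<sigma> b"
      using p q \<sigma>_poly[OF poly_over_mult[OF E p(1) q(1)]] \<sigma>_poly map_hom_mult[OF E h p(1) q(1)]
      by simp
  qed
  moreover have "\<sigma> a = \<tau> a" if "a \<in> E" for a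
    using \<sigma>_poly[OF poly_over_const[OF E that]] hom_0[OF E h] by (simp add: map_poly_pCons)
  moreover have "\<sigma> x = y"
    using \<sigma>_poly[OF poly_over_X[OF E]] hom_0[OF E h] hom_1[OF E h] by (simp add: map_poly_pCons)
  ultimately show ?thesis
    using that by blast
qed

lemma hom_on_extend_root:
  assumes K: "is_subfield K" and alg: "\<forall>z. algebraic_over K z" and y: "poly (min_poly K x) y = 0"
  obtains \<sigma> where "hom_on (gen_field (insert x K)) \<sigma>" "\<forall>a\<in>K. \<sigma> a = a" "\<sigma> x = y"
proof -
  have "poly (map_poly id (min_poly K x)) y = 0"
    using y by simp
  then obtain \<sigma> where "hom_on (gen_field (insert x K)) \<sigma>" "\<forall>a\<in>K. \<sigma> a = id a" "\<sigma> x = y"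
    by (rule hom_on_extend[OF K alg hom_on_id])
  then show ?thesis
    using that by simp
qed


section \<open>Separability over perfect fields\<close>

lemma order_ge_2_imp_pderiv_root:
  fixes f :: "'a::field poly"
  assumes "f \<noteq> 0" "order r f \<ge> 2"
  shows "poly f r = 0" "poly (pderiv f) r = 0"
proof -
  have "[:-r, 1:] ^ 2 dvd f"
    using order_1[of r f] assms(2) power_le_dvd by blast
  then obtain q where q: "f = [:-r, 1:] ^ 2 * q"
    by blast
  then show "poly f r = 0"
    by simp
  have "pderiv f = [:-r, 1:] ^ 2 * pderiv q + q * (smult (of_nat 2) [:-r, 1:] * pderiv [:-r, 1:])"
    unfolding q pderiv_mult using pderiv_power_Suc[of "[:-r, 1:]" 1] by (simp add: numeral_2_eq_2)
  then show "poly (pderiv f) r = 0"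
    by simp
qed

lemma pderiv_min_poly_eq_0_if_not_rsquarefree:
  assumes K: "is_subfield K" and alg: "algebraic_over K x"
    and nsq: "\<not> rsquarefree (min_poly K x)"
  shows "pderiv (min_poly K x) = 0"
proof (rule ccontr)
  let ?f = "min_poly K x"
  assume nz: "pderiv ?f \<noteq> 0"
  have f0: "?f \<noteq> 0"
    using min_poly_nonzero[OF K alg] .
  obtain r where "order r ?f \<noteq> 0" "order r ?f \<noteq> 1"
    using nsq f0 unfolding rsquarefree_def by blast
  then have r: "poly ?f r = 0" "poly (pderiv ?f) r = 0"
    using order_ge_2_imp_pderiv_root[OF f0] by auto
  \<comment> \<open>the double root \<open>r\<close> has minimal polynomial \<open>?f\<close>, yet is a root of its derivative\<close>
  have algr: "algebraic_over K r"
    unfolding algebraic_over_def using f0 min_poly_over[OF K alg] r(1) by blast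
  have "degree (min_poly K r) \<le> degree (pderiv ?f)"
    using min_poly_minimal[OF K algr nz poly_over_pderiv[OF K min_poly_over[OF K alg]] r(2)] .
  moreover have "degree (pderiv ?f) \<le> degree ?f - 1"
    by (rule degree_le) (auto simp: coeff_pderiv coeff_eq_0)
  then have "degree (pderiv ?f) < degree ?f"
    using degree_min_poly_pos[OF K alg] by linarith
  ultimately show False
    using min_poly_of_conjugate[OF K alg r(1)] by simp
qed

lemma CHAR_dvd_if_pderiv_eq_0:
  fixes f :: "'a::field poly"
  assumes "pderiv f = 0" "coeff f i \<noteq> 0" "i > 0"
  shows "CHAR('a) dvd i"
proof -
  obtain n where i: "i = Suc n"
    using assms(3) by (metis gr0_implies_Suc)
  have "of_nat i * coeff f i = 0"
    using arg_cong[OF assms(1), of "\<lambda>p. coeff p n"] by (simp add: coeff_pderiv i)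
  then show ?thesis
    using assms(2) by (simp add: of_nat_eq_0_iff_char_dvd)
qed

lemma poly_eq_sum_multiples:
  fixes f :: "'a::comm_semiring_1 poly"
  assumes q: "q > 0" and supp: "\<And>i. coeff f i \<noteq> 0 \<Longrightarrow> q dvd i"
  shows "poly f x = (\<Sum>j\<le>degree f div q. coeff f (q * j) * x ^ (q * j))"
proof -
  let ?N = "degree f div q"
  have le_iff: "q * j \<le> degree f \<longleftrightarrow> j \<le> ?N" for j
    using q by (simp add: less_eq_div_iff_mult_less_eq mult.commute)
  have "poly f x = (\<Sum>i\<le>degree f. coeff f i * x ^ i)"
    by (simp add: poly_altdef)
  also have "\<dots> = (\<Sum>i\<in>(\<lambda>j. q * j) ` {..?N}. coeff f i * x ^ i)"
  proof (rule sum.mono_neutral_right)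
    show "(\<lambda>j. q * j) ` {..?N} \<subseteq> {..degree f}"
      using le_iff by auto
    show "\<forall>i\<in>{..degree f} - (\<lambda>j. q * j) ` {..?N}. coeff f i * x ^ i = 0"
    proof
      fix i assume i: "i \<in> {..degree f} - (\<lambda>j. q * j) ` {..?N}"
      have "\<not> q dvd i"
      proof
        assume "q dvd i"
        then obtain j where "i = q * j" ..
        then show False
          using i le_iff[of j] by auto
      qed
      then have "coeff f i = 0"
        using supp by blast
      then show "coeff f i * x ^ i = 0"
        by simp
    qed
  qed simp
  also have "\<dots> = (\<Sum>j\<le>?N. coeff f (q * j) * x ^ (q * j))"
    using q by (subst sum.reindex) (auto simp: inj_on_def)
  finally show ?thesis .
qed

lemma poly_sum_monom_power_CHAR:
  fixes f :: "'a::field poly"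
  assumes p: "prime CHAR('a)" and b: "\<And>j. b j ^ CHAR('a) = coeff f (CHAR('a) * j)"
    and supp: "\<And>i. coeff f i \<noteq> 0 \<Longrightarrow> CHAR('a) dvd i"
  shows "poly (\<Sum>j\<le>degree f div CHAR('a). monom (b j) j) x ^ CHAR('a) = poly f x"
proof -
  let ?p = "CHAR('a)" and ?N = "degree f div CHAR('a)"
  have "poly (\<Sum>j\<le>?N. monom (b j) j) x ^ ?p = (\<Sum>j\<le>?N. (b j * x ^ j) ^ ?p)"
    by (simp add: poly_sum poly_monom freshmans_dream_sum[OF p])
  also have "\<dots> = (\<Sum>j\<le>?N. coeff f (?p * j) * x ^ (?p * j))"
  proof (rule sum.cong)
    fix j
    have "x ^ (?p * j) = (x ^ j) ^ ?p"
      by (simp only: mult.commute[of "CHAR('a)" j] power_mult)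
    then show "(b j * x ^ j) ^ ?p = coeff f (?p * j) * x ^ (?p * j)"
      using b[of j] by (simp only: power_mult_distrib)
  qed simp
  also have "\<dots> = poly f x"
    by (rule poly_eq_sum_multiples[symmetric]) (use prime_gt_0_nat[OF p] supp in auto)
  finally show ?thesis .
qed

lemma poly_over_CHAR_root:
  fixes f :: "'a::field poly"
  assumes K: "is_subfield K" and pf: "perfect_field K" and p: "prime CHAR('a)"
    and f: "poly_over K f" "f \<noteq> 0" and supp: "\<And>i. coeff f i \<noteq> 0 \<Longrightarrow> CHAR('a) dvd i"
  obtains g where "poly_over K g" "g \<noteq> 0" "CHAR('a) * degree g = degree f"
    "\<And>x. poly g x ^ CHAR('a) = poly f x"
proof -
  let ?p = "CHAR('a)" and ?N = "degree f div CHAR('a)"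
  have p1: "?p > 1"
    using prime_gt_1_nat[OF p] .
  have "\<forall>z\<in>K. \<exists>y\<in>K. y ^ ?p = z"
    using pf p of_nat_CHAR unfolding perfect_field_def by blast
  then have "\<forall>j. \<exists>y. y \<in> K \<and> y ^ ?p = coeff f (?p * j)"
    using poly_overD[OF f(1)] by blast
  then obtain b where b: "\<And>j. b j \<in> K" "\<And>j. b j ^ ?p = coeff f (?p * j)"
    by metis
  define g where "g = (\<Sum>j\<le>?N. monom (b j) j)"
  have "?p * ?N = degree f"
    using supp[of "degree f"] f(2) by simp
  then have "b ?N ^ ?p \<noteq> 0"
    using b(2)[of ?N] f(2) by simp
  moreover have "coeff g ?N = b ?N"
    unfolding g_def by (simp add: coeff_sum)
  ultimately have cg: "coeff g ?N \<noteq> 0"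
    using p1 by (auto simp: zero_power)
  have "degree g \<le> ?N"
    unfolding g_def by (rule degree_sum_le) (auto intro: order_trans[OF degree_monom_le])
  then have "degree g = ?N"
    using le_degree[OF cg] by simp
  moreover have "poly_over K g"
    unfolding g_def using K b(1) by (auto intro!: poly_over_sum poly_over_monom)
  moreover have "poly g x ^ ?p = poly f x" for x
    unfolding g_def using poly_sum_monom_power_CHAR[OF p b(2) supp] .
  ultimately show ?thesis
    using that cg \<open>?p * ?N = degree f\<close> by fastforce
qed

lemma rsquarefree_min_poly_perfect:
  assumes K: "is_subfield K" and pf: "perfect_field K" and alg: "algebraic_over K x"
  shows "rsquarefree (min_poly K x)"
proof (rule ccontr)
  let ?f = "min_poly K x"
  assume "\<not> rsquarefree ?f"
  then have pd0: "pderiv ?f = 0"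
    by (rule pderiv_min_poly_eq_0_if_not_rsquarefree[OF K alg])
  have f0: "?f \<noteq> 0" and dpos: "degree ?f > 0"
    using min_poly_nonzero[OF K alg] degree_min_poly_pos[OF K alg] .
  have supp: "CHAR('a) dvd i" if "coeff ?f i \<noteq> 0" for i
  proof (cases "i = 0")
    case True
    then show ?thesis by simp
  next
    case False
    then show ?thesis
      using CHAR_dvd_if_pderiv_eq_0[OF pd0 that] by simp
  qed
  \<comment> \<open>in characteristic zero the leading coefficient would have to vanish\<close>
  have "CHAR('a) > 0"
    using supp[of "degree ?f"] f0 dpos by (metis dvd_0_left_iff gr0I leading_coeff_0_iff)
  then have p: "prime CHAR('a)"
    by (rule prime_CHAR_semidom)
  obtain g where g: "poly_over K g" "g \<noteq> 0" "CHAR('a) * degree g = degree ?f"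
      "\<And>y. poly g y ^ CHAR('a) = poly ?f y"
    using poly_over_CHAR_root[OF K pf p min_poly_over[OF K alg] f0 supp] by blast
  have "poly g x = 0"
    using g(4)[of x] min_poly_root[OF K alg] by simp
  then have "degree ?f \<le> degree g"
    using min_poly_minimal[OF K alg g(2,1)] by blast
  moreover have "degree g \<noteq> 0"
    using g(3) dpos by (intro notI) simp
  then have "degree g < degree ?f"
    using g(3) prime_gt_1_nat[OF p] by (metis One_nat_def lessI mult_less_mono1 nat_mult_1 neq0_conv)
  ultimately show False
    by simp
qed

section \<open>Primitive elements\<close>

lemma gen_field_eq_gen_field_insertI:
  assumes "\<theta> \<in> gen_field S" "S \<subseteq> gen_field (insert \<theta> K)" "K \<subseteq> gen_field S"
  shows "gen_field S = gen_field (insert \<theta> K)"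
  using assms by (intro antisym gen_field_least[OF subfield_gen_field]) auto

definition subfield_ring :: "'a::field set \<Rightarrow> 'a ring" where
  "subfield_ring E =
    \<lparr>carrier = E, monoid.mult = (\<lambda>x y. x * y), one = 1, ring.zero = 0, add = (\<lambda>x y. x + y)\<rparr>"

lemma field_subfield_ring:
  assumes E: "is_subfield (E :: 'a::field set)"
  shows "field (subfield_ring E)"
proof -
  have inv: "\<exists>y\<in>E. x * y = 1" if "x \<in> E" "x \<noteq> 0" for x
    using that subfield_inverse[OF E] by (intro bexI[of _ "inverse x"]) auto
  have neg: "\<exists>y\<in>E. x + y = 0" if "x \<in> E" for x
    using that subfield_uminus[OF E] by (intro bexI[of _ "- x"]) auto
  show ?thesis
    unfolding subfield_ring_def
    by unfold_locales (use subfieldD[OF E] inv neg in \<open>auto simp: algebra_simps Units_def\<close>)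
qed

lemma finite_subfield_cyclic:
  assumes E: "is_subfield (E :: 'a::field set)" and fin: "finite E"
  obtains a where "a \<in> E" "\<And>z. z \<in> E \<Longrightarrow> z \<noteq> 0 \<Longrightarrow> \<exists>i::nat. z = a ^ i"
proof -
  interpret field "subfield_ring E"
    by (rule field_subfield_ring[OF E])
  have pow: "x [^]\<^bsub>subfield_ring E\<^esub> (n::nat) = x ^ n" for x n
    by (induction n) (simp_all add: subfield_ring_def)
  have "finite (carrier (subfield_ring E))"
    using fin by (simp add: subfield_ring_def)
  then obtain a where a: "a \<in> carrier (mult_of (subfield_ring E))"
    and gen: "carrier (mult_of (subfield_ring E)) = {a [^]\<^bsub>subfield_ring E\<^esub> i | i::nat. i \<in> UNIV}"
    using finite_field_mult_group_has_gen by blast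
  show ?thesis
  proof (rule that)
    show "a \<in> E"
      using a by (simp add: subfield_ring_def)
    fix z assume "z \<in> E" "z \<noteq> 0"
    then have "z \<in> carrier (mult_of (subfield_ring E))"
      by (simp add: subfield_ring_def)
    then show "\<exists>i::nat. z = a ^ i"
      unfolding gen by (auto simp: pow)
  qed
qed

lemma finite_polys_over_bounded:
  assumes fin: "finite E"
  shows "finite {p. poly_over E p \<and> degree p \<le> n}"
proof -
  let ?f = "\<lambda>p. map (coeff p) [0..<Suc n]"
  have "inj_on ?f {p. poly_over E p \<and> degree p \<le> n}"
  proof (rule inj_onI, rule poly_eqI)
    fix p q i assume p: "p \<in> {p. poly_over E p \<and> degree p \<le> n}"
      and q: "q \<in> {p. poly_over E p \<and> degree p \<le> n}" and eq: "?f p = ?f q"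
    show "coeff p i = coeff q i"
    proof (cases "i \<le> n")
      case True
      then show ?thesis
        using eq by (simp add: map_eq_conv del: upt_Suc)
    next
      case False
      then show ?thesis
        using p q by (simp add: coeff_eq_0)
    qed
  qed
  moreover have "?f ` {p. poly_over E p \<and> degree p \<le> n} \<subseteq> {xs. set xs \<subseteq> E \<and> length xs = Suc n}"
    by (auto simp: poly_overD simp del: upt_Suc)
  ultimately show ?thesis
    using inj_on_finite finite_lists_length_eq[OF fin] by blast
qed

lemma finite_gen_field_insert:
  assumes E: "is_subfield E" and fin: "finite E" and alg: "\<forall>z. algebraic_over E z"
  shows "finite (gen_field (insert x E))"
proof -
  let ?m = "min_poly E x"
  have "gen_field (insert x E) \<subseteq> (\<lambda>p. poly p x) ` {p. poly_over E p \<and> degree p \<le> degree ?m}"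
  proof
    fix z assume "z \<in> gen_field (insert x E)"
    then obtain p where p: "poly_over E p" "z = poly p x"
      unfolding gen_field_insert_eq_polys[OF E alg] by blast
    have algx: "algebraic_over E x"
      using alg by blast
    then have "degree (p mod ?m) \<le> degree ?m"
      using poly_mod_min_poly(3)[OF E algx p(1)] by auto
    then show "z \<in> (\<lambda>p. poly p x) ` {p. poly_over E p \<and> degree p \<le> degree ?m}"
      using poly_mod_min_poly(1,2)[OF E algx p(1)] p(2) by (intro image_eqI[of _ _ "p mod ?m"]) auto
  qed
  then show ?thesis
    using finite_polys_over_bounded[OF fin] finite_surj by blast
qed

lemma primitive_element_pair_finite:
  assumes K: "is_subfield K" and fin: "finite K" and alg: "\<forall>z. algebraic_over K z"
  shows "\<exists>\<theta>. gen_field (insert \<beta> (insert \<gamma> K)) = gen_field (insert \<theta> K)"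
proof -
  let ?E1 = "gen_field (insert \<beta> K)" and ?E = "gen_field (insert \<beta> (insert \<gamma> K))"
  have "K \<subseteq> ?E1"
    using gen_field_superset by blast
  then have "finite (gen_field (insert \<gamma> ?E1))"
    using finite_gen_field_insert[OF subfield_gen_field finite_gen_field_insert[OF K fin alg]]
      algebraic_over_mono alg by blast
  moreover have "?E = gen_field (insert \<gamma> ?E1)"
    using gen_field_insert_gen_field[of \<gamma> "insert \<beta> K"] by (simp add: insert_commute)
  ultimately have "finite ?E"
    by simp
  then obtain a where a: "a \<in> ?E" and gen: "\<And>z. z \<in> ?E \<Longrightarrow> z \<noteq> 0 \<Longrightarrow> \<exists>i::nat. z = a ^ i"
    using finite_subfield_cyclic[OF subfield_gen_field] by blast
  \<comment> \<open>a generator of the cyclic group \<open>?E - {0}\<close> is a primitive element\<close>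
  have "?E \<subseteq> gen_field (insert a K)"
  proof
    fix z assume "z \<in> ?E"
    show "z \<in> gen_field (insert a K)"
    proof (cases "z = 0")
      case True
      then show ?thesis
        using subfield_0[OF subfield_gen_field] by simp
    next
      case False
      then obtain i where "z = a ^ i"
        using gen \<open>z \<in> ?E\<close> by blast
      then show ?thesis
        using subfield_power[OF subfield_gen_field] gen_field_superset[of "insert a K"] by blast
    qed
  qed
  then have "?E = gen_field (insert a K)"
    using a gen_field_superset[of "insert \<beta> (insert \<gamma> K)"]
    by (intro gen_field_eq_gen_field_insertI) auto
  then show ?thesis
    by blast
qed

lemma rsquarefree_dvd:
  assumes "rsquarefree p" "q dvd p"
  shows "rsquarefree q"
proof -
  have "p \<noteq> 0" "q \<noteq> 0"
    using assms unfolding rsquarefree_def by auto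
  have "order a q \<le> 1" for a
  proof -
    have "order a p \<le> 1"
      using assms(1) unfolding rsquarefree_def by (metis le_refl zero_le One_nat_def)
    then show ?thesis
      using dvd_imp_order_le[OF \<open>p \<noteq> 0\<close> assms(2)] by (metis le_trans)
  qed
  then show ?thesis
    using \<open>q \<noteq> 0\<close> unfolding rsquarefree_def by (simp add: le_Suc_eq)
qed

lemma mem_subfield_if_unique_root:
  assumes ac: "alg_closed TYPE('a::field)" and E: "is_subfield E" and alg: "algebraic_over E (\<gamma>::'a)"
    and sep: "rsquarefree (min_poly E \<gamma>)" and roots: "\<And>r. poly (min_poly E \<gamma>) r = 0 \<Longrightarrow> r = \<gamma>"
  shows "\<gamma> \<in> E"
proof -
  let ?m = "min_poly E \<gamma>"
  have "{r. poly ?m r = 0} = {\<gamma>}"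
    using roots min_poly_root[OF E alg] by blast
  then have "degree ?m = 1"
    using card_roots_rsquarefree[OF ac sep] by simp
  then obtain a b where "?m = [:b, a:]" "a \<noteq> 0"
    by (rule degree1_coeffs)
  then have m: "?m = [:b, 1:]"
    using min_poly_monic[OF E alg] by simp
  have "b \<in> E"
    using poly_overD[OF min_poly_over[OF E alg], of 0] m by simp
  moreover have "\<gamma> = - b"
    using min_poly_root[OF E alg] m by (simp add: eq_neg_iff_add_eq_0 add.commute)
  ultimately show ?thesis
    using subfield_uminus[OF E] by simp
qed

lemma exists_separating_scalar:
  fixes \<beta> \<gamma> :: "'a::field"
  assumes "infinite K" "finite A" "finite B"
  obtains c where "c \<in> K" "\<And>b g. b \<in> A \<Longrightarrow> g \<in> B \<Longrightarrow> b + c * g = \<beta> + c * \<gamma> \<Longrightarrow> g = \<gamma>"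
proof -
  define C where "C = (\<lambda>(b, g). (b - \<beta>) / (\<gamma> - g)) ` (A \<times> B)"
  have "finite C"
    unfolding C_def using assms(2,3) by simp
  then have "K - C \<noteq> {}"
    using assms(1) by (metis finite_subset Diff_eq_empty_iff)
  then obtain c where c: "c \<in> K" "c \<notin> C"
    by blast
  show ?thesis
  proof (rule that[OF c(1)])
    fix b g assume bg: "b \<in> A" "g \<in> B" "b + c * g = \<beta> + c * \<gamma>"
    show "g = \<gamma>"
    proof (rule ccontr)
      assume "g \<noteq> \<gamma>"
      then have "c = (b - \<beta>) / (\<gamma> - g)"
        using bg(3) by (simp add: field_simps)
      then have "c \<in> C"
        unfolding C_def using bg(1,2) by (intro image_eqI[of _ _ "(b, g)"]) auto
      then show False
        using c(2) by simp
    qed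
  qed
qed

text \<open>For \<open>c\<close> as above, \<open>\<gamma>\<close> is the only common root of \<open>f\<^sub>\<gamma>\<close> and \<open>f\<^sub>\<beta>(\<beta> + c\<gamma> - c X)\<close>,
  which both lie over \<open>K(\<beta> + c\<gamma>)\<close>; hence so does \<open>\<gamma>\<close>.\<close>

lemma mem_gen_field_insert_add_mult:
  assumes K: "is_subfield K" and alg: "\<forall>z. algebraic_over K z"
    and ac: "alg_closed TYPE('a::field)" and sep: "rsquarefree (min_poly K (\<gamma>::'a))" and c: "c \<in> K"
    and sep_c: "\<And>b g. poly (min_poly K \<beta>) b = 0 \<Longrightarrow> poly (min_poly K \<gamma>) g = 0 \<Longrightarrow>
      b + c * g = \<beta> + c * \<gamma> \<Longrightarrow> g = \<gamma>"
  shows "\<gamma> \<in> gen_field (insert (\<beta> + c * \<gamma>) K)"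
proof -
  let ?fb = "min_poly K \<beta>" and ?fg = "min_poly K \<gamma>" and ?\<theta> = "\<beta> + c * \<gamma>"
  let ?E = "gen_field (insert ?\<theta> K)" let ?m = "min_poly ?E \<gamma>"
  have fb: "poly_over K ?fb" "poly ?fb \<beta> = 0" and fg: "poly_over K ?fg" "poly ?fg \<gamma> = 0"
    using alg min_poly_over[OF K] min_poly_root[OF K] by auto
  have E: "is_subfield ?E" and KE: "K \<subseteq> ?E" and \<theta>E: "?\<theta> \<in> ?E"
    using subfield_gen_field gen_field_superset by blast+
  have algE: "algebraic_over ?E \<gamma>"
    using alg algebraic_over_mono[OF _ KE] by blast
  have "poly_over ?E [:?\<theta>, -c:]"
    using E KE \<theta>E c by (auto simp: poly_over_pCons_iff poly_over_0 intro: subfield_uminus)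
  then have m_dvd_b: "?m dvd pcompose ?fb [:?\<theta>, -c:]"
    using E poly_over_mono[OF fb(1) KE] fb(2)
    by (intro min_poly_dvd[OF E algE] poly_over_pcompose) (auto simp: poly_pcompose)
  have m_dvd: "?m dvd ?fg"
    using min_poly_dvd[OF E algE poly_over_mono[OF fg(1) KE] fg(2)] .
  have roots: "r = \<gamma>" if r: "poly ?m r = 0" for r
  proof -
    have "poly (pcompose ?fb [:?\<theta>, -c:]) r = 0" "poly ?fg r = 0"
      using r m_dvd_b m_dvd by (auto simp: dvd_def)
    then have "poly ?fb (?\<theta> - c * r) = 0" "poly ?fg r = 0"
      by (simp_all add: poly_pcompose algebra_simps)
    then show "r = \<gamma>"
      using sep_c[of "?\<theta> - c * r" r] by simp
  qed
  show ?thesis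
    using mem_subfield_if_unique_root[OF ac E algE rsquarefree_dvd[OF sep m_dvd] roots] .
qed

lemma primitive_element_pair_infinite:
  assumes K: "is_subfield K" and inf: "infinite K" and alg: "\<forall>z. algebraic_over K z"
    and ac: "alg_closed TYPE('a::field)" and sep: "rsquarefree (min_poly K (\<gamma>::'a))"
  shows "\<exists>\<theta>. gen_field (insert \<beta> (insert \<gamma> K)) = gen_field (insert \<theta> K)"
proof -
  have "finite {r. poly (min_poly K \<beta>) r = 0}" "finite {r. poly (min_poly K \<gamma>) r = 0}"
    using poly_roots_finite min_poly_nonzero[OF K] alg by auto
  then obtain c where c: "c \<in> K" and sep_c: "\<And>b g. b \<in> {r. poly (min_poly K \<beta>) r = 0} \<Longrightarrow>
      g \<in> {r. poly (min_poly K \<gamma>) r = 0} \<Longrightarrow> b + c * g = \<beta> + c * \<gamma> \<Longrightarrow> g = \<gamma>"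
    using exists_separating_scalar[OF inf] by blast
  let ?E = "gen_field (insert (\<beta> + c * \<gamma>) K)"
  have E: "is_subfield ?E" and KE: "K \<subseteq> ?E" and \<theta>E: "\<beta> + c * \<gamma> \<in> ?E"
    using subfield_gen_field gen_field_superset by blast+
  have \<gamma>E: "\<gamma> \<in> ?E"
    using mem_gen_field_insert_add_mult[OF K alg ac sep c] sep_c by simp
  have "(\<beta> + c * \<gamma>) - c * \<gamma> \<in> ?E"
    using subfield_diff[OF E \<theta>E subfield_mult[OF E _ \<gamma>E]] c KE by blast
  then have "\<beta> \<in> ?E"
    by simp
  moreover have "\<beta> + c * \<gamma> \<in> gen_field (insert \<beta> (insert \<gamma> K))"
    using c gen_field_superset[of "insert \<beta> (insert \<gamma> K)"]
    by (intro subfield_add[OF subfield_gen_field] subfield_mult[OF subfield_gen_field]) auto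
  ultimately have "gen_field (insert \<beta> (insert \<gamma> K)) = ?E"
    using \<gamma>E KE gen_field_superset[of "insert \<beta> (insert \<gamma> K)"]
    by (intro gen_field_eq_gen_field_insertI) auto
  then show ?thesis
    by blast
qed

lemma primitive_element_pair:
  assumes K: "is_subfield K" and alg: "\<forall>z. algebraic_over K z"
    and ac: "alg_closed TYPE('a::field)" and sep: "rsquarefree (min_poly K (\<gamma>::'a))"
  shows "\<exists>\<theta>. gen_field (insert \<beta> (insert \<gamma> K)) = gen_field (insert \<theta> K)"
  using primitive_element_pair_finite[OF K _ alg] primitive_element_pair_infinite[OF K _ alg ac sep]
  by blast

lemma finite_ext_eq_gen_field_basis:
  assumes "finite_ext K E" "is_basis_over K E B"
  shows "E = gen_field (K \<union> B)"
proof
  have E: "is_subfield E" and KE: "K \<subseteq> E"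
    using assms unfolding finite_ext_def by auto
  have B: "B \<subseteq> E" "E = {\<Sum>b\<in>B. c b * b | c. \<forall>b\<in>B. c b \<in> K}"
    using assms(2) unfolding is_basis_over_def by auto
  show "gen_field (K \<union> B) \<subseteq> E"
    using B KE by (intro gen_field_least[OF E]) auto
  show "E \<subseteq> gen_field (K \<union> B)"
    using gen_field_superset[of "K \<union> B"] unfolding B(2)
    by (auto intro!: subfield_sum[OF subfield_gen_field] subfield_mult[OF subfield_gen_field])
qed

lemma primitive_element:
  assumes K: "is_subfield K" and alg: "\<forall>z. algebraic_over K z" and pf: "perfect_field K"
    and ac: "alg_closed TYPE('a::field)" and fe: "finite_ext K (E::'a set)"
  shows "\<exists>\<alpha>. gen_field (insert \<alpha> K) = E"
proof -
  obtain B where B: "is_basis_over K E B"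
    using fe unfolding finite_ext_def by blast
  then have "finite B"
    unfolding is_basis_over_def by auto
  then have "\<exists>\<alpha>. gen_field (K \<union> B) = gen_field (insert \<alpha> K)"
  proof (induction B rule: finite_induct)
    case empty
    have "insert 0 K = K"
      using subfield_0[OF K] by blast
    then show ?case
      using gen_field_eq_self[OF K] by (intro exI[of _ 0]) simp
  next
    case (insert b B)
    then obtain \<alpha> where \<alpha>: "gen_field (K \<union> B) = gen_field (insert \<alpha> K)"
      by blast
    have "gen_field (K \<union> insert b B) = gen_field (insert b (gen_field (K \<union> B)))"
      using gen_field_insert_gen_field[of b "K \<union> B"] by simp
    also have "\<dots> = gen_field (insert b (insert \<alpha> K))"
      unfolding \<alpha> gen_field_insert_gen_field ..
    finally show ?case
      using primitive_element_pair[OF K alg ac rsquarefree_min_poly_perfect[OF K pf], of \<alpha> b] alg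
      by metis
  qed
  then show ?thesis
    using finite_ext_eq_gen_field_basis[OF fe B] by metis
qed

section \<open>Linear algebra over a subfield\<close>

definition span_over :: "'a::field set \<Rightarrow> 'a set \<Rightarrow> 'a set" where
  "span_over K S = {\<Sum>s\<in>S. c s * s | c. \<forall>s\<in>S. c s \<in> K}"

definition lin_indep :: "'a::field set \<Rightarrow> 'a set \<Rightarrow> bool" where
  "lin_indep K I \<longleftrightarrow> (\<forall>c. (\<forall>b\<in>I. c b \<in> K) \<and> (\<Sum>b\<in>I. c b * b) = 0 \<longrightarrow> (\<forall>b\<in>I. c b = 0))"

lemma lin_indepD:
  "lin_indep K I \<Longrightarrow> (\<And>b. b \<in> I \<Longrightarrow> c b \<in> K) \<Longrightarrow> (\<Sum>b\<in>I. c b * b) = 0 \<Longrightarrow> b \<in> I \<Longrightarrow> c b = 0"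
  unfolding lin_indep_def by blast

context
  fixes K :: "'a::field set"
  assumes K: "is_subfield K"
begin

lemma span_over_diff:
  assumes "x \<in> span_over K S" "y \<in> span_over K S"
  shows "x - y \<in> span_over K S"
proof -
  obtain c d where c: "\<forall>s\<in>S. c s \<in> K" "x = (\<Sum>s\<in>S. c s * s)"
    and d: "\<forall>s\<in>S. d s \<in> K" "y = (\<Sum>s\<in>S. d s * s)"
    using assms unfolding span_over_def by blast
  have "x - y = (\<Sum>s\<in>S. (c s - d s) * s)"
    using c d by (simp add: sum_subtractf algebra_simps)
  moreover have "\<forall>s\<in>S. c s - d s \<in> K"
    using c d subfield_diff[OF K] by blast
  ultimately show ?thesis
    unfolding span_over_def by (intro CollectI exI[of _ "\<lambda>s. c s - d s"]) simp
qed

lemma span_over_smult: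
  assumes "k \<in> K" "x \<in> span_over K S"
  shows "k * x \<in> span_over K S"
proof -
  obtain c where c: "\<forall>s\<in>S. c s \<in> K" "x = (\<Sum>s\<in>S. c s * s)"
    using assms unfolding span_over_def by blast
  have "k * x = (\<Sum>s\<in>S. (k * c s) * s)"
    using c by (simp add: sum_distrib_left mult.assoc)
  moreover have "\<forall>s\<in>S. k * c s \<in> K"
    using c assms(1) subfield_mult[OF K] by blast
  ultimately show ?thesis
    unfolding span_over_def by (intro CollectI exI[of _ "\<lambda>s. k * c s"]) simp
qed

lemma span_over_insert:
  assumes "finite S" "s \<notin> S" "x \<in> span_over K (insert s S)"
  obtains a where "a \<in> K" "x - a * s \<in> span_over K S"
proof -
  obtain c where c: "\<forall>t\<in>insert s S. c t \<in> K" "x = (\<Sum>t\<in>insert s S. c t * t)"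
    using assms(3) unfolding span_over_def by blast
  then have "x - c s * s = (\<Sum>t\<in>S. c t * t)"
    using assms(1,2) by simp
  then show ?thesis
    using that c unfolding span_over_def by force
qed

lemma lin_indep_subset:
  assumes fin: "finite I" and ind: "lin_indep K I" and J: "J \<subseteq> I"
  shows "lin_indep K J"
  unfolding lin_indep_def
proof (intro allI impI ballI)
  fix c b assume c: "(\<forall>b\<in>J. c b \<in> K) \<and> (\<Sum>b\<in>J. c b * b) = 0" and b: "b \<in> J"
  define c' where "c' v = (if v \<in> J then c v else 0)" for v
  have "(\<Sum>v\<in>I. c' v * v) = (\<Sum>v\<in>J. c' v * v)"
    using fin J by (intro sum.mono_neutral_right) (auto simp: c'_def)
  also have "\<dots> = 0"
    using c by (simp add: c'_def)
  finally have sum0: "(\<Sum>v\<in>I. c' v * v) = 0" .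
  have "c' b = 0"
  proof (rule lin_indepD[OF ind _ sum0])
    show "c' v \<in> K" for v
      using c subfield_0[OF K] by (auto simp: c'_def)
  qed (use b J in blast)
  then show "c b = 0"
    using b by (simp add: c'_def)
qed

lemma zero_notin_lin_indep: "finite I \<Longrightarrow> lin_indep K I \<Longrightarrow> 0 \<notin> I"
  using lin_indep_subset[of I "{0}"] subfield_1[OF K] unfolding lin_indep_def by fastforce

lemma shear_inj_on:
  assumes fin: "finite I" and ind: "lin_indep K I" and v0: "v0 \<in> I" and t: "\<And>v. v \<in> I \<Longrightarrow> t v \<in> K"
  shows "inj_on (\<lambda>v. v - t v * v0) (I - {v0})"
proof (rule inj_onI, rule ccontr)
  fix v u assume v: "v \<in> I - {v0}" and u: "u \<in> I - {v0}" and ne: "v \<noteq> u"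
    and eq: "v - t v * v0 = u - t u * v0"
  define c where "c w = (if w = v then 1 else if w = u then - 1 else t u - t v)" for w
  have "v0 \<noteq> v" "v0 \<noteq> u"
    using v u by auto
  then have "(\<Sum>w\<in>{v, u, v0}. c w * w) = v - u + (t u - t v) * v0"
    using ne by (simp add: c_def)
  also have "\<dots> = (v - t v * v0) - (u - t u * v0)"
    by (simp add: algebra_simps)
  also have "\<dots> = 0"
    using eq by simp
  finally have sum0: "(\<Sum>w\<in>{v, u, v0}. c w * w) = 0" .
  have ind3: "lin_indep K {v, u, v0}"
    by (rule lin_indep_subset[OF fin ind]) (use v u v0 in auto)
  have cK: "c w \<in> K" if "w \<in> {v, u, v0}" for w
    using subfield_1[OF K] subfield_uminus[OF K subfield_1[OF K]] subfield_diff[OF K t[of u] t[of v]] v u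
    by (simp add: c_def)
  have "c v = 0"
    using lin_indepD[OF ind3 cK sum0, of v] by simp
  then show False
    by (simp add: c_def)
qed

lemma shear_lin_indep:
  assumes fin: "finite I" and ind: "lin_indep K I" and v0: "v0 \<in> I" and t: "\<And>v. v \<in> I \<Longrightarrow> t v \<in> K"
  shows "lin_indep K ((\<lambda>v. v - t v * v0) ` (I - {v0}))"
  unfolding lin_indep_def
proof (intro allI impI ballI)
  let ?\<phi> = "\<lambda>v. v - t v * v0" and ?T = "I - {v0}"
  fix d x assume d: "(\<forall>b\<in>?\<phi> ` ?T. d b \<in> K) \<and> (\<Sum>b\<in>?\<phi> ` ?T. d b * b) = 0"
    and x: "x \<in> ?\<phi> ` ?T"
  define c where "c w = (if w = v0 then - (\<Sum>v\<in>?T. d (?\<phi> v) * t v) else d (?\<phi> w))" for w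
  have "0 = (\<Sum>v\<in>?T. d (?\<phi> v) * ?\<phi> v)"
    using d sum.reindex[OF shear_inj_on[OF assms], where g = "\<lambda>b. d b * b"] by simp
  also have "\<dots> = (\<Sum>v\<in>?T. d (?\<phi> v) * v) - (\<Sum>v\<in>?T. d (?\<phi> v) * t v) * v0"
    by (simp add: algebra_simps sum_subtractf sum_distrib_right sum_distrib_left)
  also have "\<dots> = (\<Sum>v\<in>?T. c v * v) + c v0 * v0"
    by (simp add: c_def)
  also have "\<dots> = (\<Sum>v\<in>I. c v * v)"
    using fin v0 by (simp add: sum.remove[of I v0] add.commute)
  finally have "(\<Sum>v\<in>I. c v * v) = 0"
    by simp
  moreover have "c v \<in> K" if "v \<in> I" for v
    using d t that by (auto simp: c_def intro!: subfield_uminus[OF K] subfield_sum[OF K] subfield_mult[OF K])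
  ultimately have "c v = 0" if "v \<in> I" for v
    using lin_indepD[OF ind] that by blast
  moreover obtain v where v: "v \<in> ?T" "x = ?\<phi> v"
    using x by blast
  ultimately have "c v = 0"
    by blast
  then show "d x = 0"
    using v by (simp add: c_def)
qed

lemma shear_subset_span_over:
  assumes a: "\<And>v. v \<in> I \<Longrightarrow> a v \<in> K \<and> v - a v * s \<in> span_over K S"
    and v0: "v0 \<in> I" "a v0 \<noteq> 0"
  shows "(\<lambda>v. v - a v / a v0 * v0) ` I \<subseteq> span_over K S"
proof (rule image_subsetI)
  fix v assume v: "v \<in> I"
  have "v - a v / a v0 * v0 = (v - a v * s) - a v / a v0 * (v0 - a v0 * s)"
    using v0(2) by (simp add: algebra_simps)
  moreover have "a v / a v0 \<in> K"
    using a[OF v] a[OF v0(1)] subfield_divide[OF K] by blast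
  then have "(v - a v * s) - a v / a v0 * (v0 - a v0 * s) \<in> span_over K S"
    using span_over_diff[OF conjunct2[OF a[OF v]] span_over_smult[OF _ conjunct2[OF a[OF v0(1)]]]]
    by blast
  ultimately show "v - a v / a v0 * v0 \<in> span_over K S"
    by (simp only:)
qed

lemma card_le_if_lin_indep_span:
  assumes "finite S"
  shows "finite I \<Longrightarrow> lin_indep K I \<Longrightarrow> I \<subseteq> span_over K S \<Longrightarrow> card I \<le> card S"
  using assms
proof (induction S arbitrary: I rule: finite_induct)
  case empty
  then have "I \<subseteq> {0}"
    unfolding span_over_def by simp
  then have "I = {}"
    using zero_notin_lin_indep[OF empty.prems(1,2)] by blast
  then show ?case
    by simp
next
  case (insert s S)
  have "\<forall>v\<in>I. \<exists>a. a \<in> K \<and> v - a * s \<in> span_over K S"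
    using span_over_insert[OF insert.hyps(1,2)] insert.prems(3) by blast
  then obtain a where a: "\<And>v. v \<in> I \<Longrightarrow> a v \<in> K \<and> v - a v * s \<in> span_over K S"
    by metis
  show ?case
  proof (cases "\<forall>v\<in>I. a v = 0")
    case True
    then have "I \<subseteq> span_over K S"
      using a by auto
    then have "card I \<le> card S"
      using insert.IH[OF insert.prems(1,2)] by blast
    then show ?thesis
      using insert.hyps by simp
  next
    case False
    then obtain v0 where v0: "v0 \<in> I" "a v0 \<noteq> 0"
      by blast
    define t where "t v = a v / a v0" for v
    have tK: "t v \<in> K" if "v \<in> I" for v
      unfolding t_def using a[OF that] a[OF v0(1)] subfield_divide[OF K] by blast
    have "(\<lambda>v. v - t v * v0) ` (I - {v0}) \<subseteq> span_over K S"
      using shear_subset_span_over[OF a v0] unfolding t_def by blast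
    moreover have "finite ((\<lambda>v. v - t v * v0) ` (I - {v0}))"
      using insert.prems(1) by simp
    ultimately have "card ((\<lambda>v. v - t v * v0) ` (I - {v0})) \<le> card S"
      using insert.IH shear_lin_indep[OF insert.prems(1,2) v0(1) tK] by simp
    moreover have "card ((\<lambda>v. v - t v * v0) ` (I - {v0})) = card I - 1"
      using card_image[OF shear_inj_on[OF insert.prems(1,2) v0(1) tK]] v0 insert.prems(1) by simp
    moreover have "card I > 0"
      using v0(1) insert.prems(1) card_gt_0_iff by blast
    ultimately show ?thesis
      using insert.hyps by simp
  qed
qed

lemma basis_span_over:
  assumes "is_basis_over K F B"
  shows "F = span_over K B" "lin_indep K B" "finite B" "B \<subseteq> F"
  using assms unfolding is_basis_over_def span_over_def lin_indep_def by blast+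

lemma ext_degree_eq_card_basis:
  assumes B: "is_basis_over K F B"
  shows "ext_degree K F = card B"
proof -
  have B': "is_basis_over K F (SOME B. is_basis_over K F B)"
    using B by (rule someI)
  note B1 = basis_span_over[OF B] and B2 = basis_span_over[OF B']
  have "card B \<le> card (SOME B. is_basis_over K F B)"
    using card_le_if_lin_indep_span[OF B2(3) B1(3,2)] B1(4) B2(1) by simp
  moreover have "card (SOME B. is_basis_over K F B) \<le> card B"
    using card_le_if_lin_indep_span[OF B1(3) B2(3,2)] B2(4) B1(1) by simp
  ultimately have "card (SOME B. is_basis_over K F B) = card B"
    by simp
  then show ?thesis
    unfolding ext_degree_def using B by auto
qed

end


section \<open>Degree of a simple extension\<close>

context
  fixes K :: "'a::field set" and \<theta> :: 'a
  assumes K: "is_subfield K" and alg: "algebraic_over K \<theta>"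
begin

lemma inj_on_powers: "inj_on (\<lambda>i. \<theta> ^ i) {..<degree (min_poly K \<theta>)}"
proof (rule inj_onI, rule ccontr)
  fix i j assume i: "i \<in> {..<degree (min_poly K \<theta>)}" and j: "j \<in> {..<degree (min_poly K \<theta>)}"
    and eq: "\<theta> ^ i = \<theta> ^ j" and ne: "i \<noteq> j"
  define q where "q = monom 1 i - monom (1::'a) j"
  have "coeff q i = 1"
    using ne by (simp add: q_def coeff_monom)
  then have "q \<noteq> 0"
    by auto
  moreover have "poly_over K q"
    unfolding q_def using K by (intro poly_over_diff poly_over_monom subfield_1)
  moreover have "poly q \<theta> = 0"
    unfolding q_def using eq by (simp add: poly_monom)
  ultimately have "degree (min_poly K \<theta>) \<le> degree q"
    using min_poly_minimal[OF K alg] by blast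
  moreover have "degree q < degree (min_poly K \<theta>)"
    unfolding q_def using i j by (auto intro: le_less_trans[OF degree_diff_le_max] simp: degree_monom_eq)
  ultimately show False
    by simp
qed

lemma lin_indep_powers: "lin_indep K ((\<lambda>i. \<theta> ^ i) ` {..<degree (min_poly K \<theta>)})"
  unfolding lin_indep_def
proof (intro allI impI ballI)
  let ?n = "degree (min_poly K \<theta>)" and ?P = "(\<lambda>i. \<theta> ^ i) ` {..<degree (min_poly K \<theta>)}"
  fix c b assume c: "(\<forall>b\<in>?P. c b \<in> K) \<and> (\<Sum>b\<in>?P. c b * b) = 0" and b: "b \<in> ?P"
  define q where "q = (\<Sum>i<?n. monom (c (\<theta> ^ i)) i)"
  have "poly q \<theta> = (\<Sum>b\<in>?P. c b * b)"
    unfolding q_def using sum.reindex[OF inj_on_powers, of "\<lambda>b. c b * b"]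
    by (simp add: poly_sum poly_monom)
  then have "poly q \<theta> = 0"
    using c by simp
  moreover have "poly_over K q"
    unfolding q_def using c K by (intro poly_over_sum poly_over_monom) auto
  moreover have "degree q < ?n"
  proof -
    have "degree q \<le> ?n - 1"
      unfolding q_def by (rule degree_sum_le) (auto intro: order_trans[OF degree_monom_le])
    then show ?thesis
      using degree_min_poly_pos[OF K alg] by linarith
  qed
  ultimately have "q = 0"
    using min_poly_minimal[OF K alg, of q] by (meson leD)
  moreover obtain i where i: "i < ?n" "b = \<theta> ^ i"
    using b by blast
  moreover have "coeff q i = c (\<theta> ^ i)"
    unfolding q_def using i by (simp add: coeff_sum)
  ultimately show "c b = 0"
    by simp
qed

lemma gen_field_insert_subset_span_powers:
  assumes "\<forall>z. algebraic_over K z"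
  shows "gen_field (insert \<theta> K) \<subseteq> span_over K ((\<lambda>i. \<theta> ^ i) ` {..<degree (min_poly K \<theta>)})"
proof
  let ?n = "degree (min_poly K \<theta>)"
  fix z assume "z \<in> gen_field (insert \<theta> K)"
  then obtain p where p: "poly_over K p" "z = poly p \<theta>"
    unfolding gen_field_insert_eq_polys[OF K assms] by blast
  define r where "r = p mod min_poly K \<theta>"
  have r: "poly_over K r" "poly r \<theta> = z" "r = 0 \<or> degree r < ?n"
    using poly_mod_min_poly[OF K alg p(1)] p(2) unfolding r_def by auto
  define c where "c b = coeff r (the_inv_into {..<?n} (\<lambda>i. \<theta> ^ i) b)" for b
  have "z = (\<Sum>i\<le>degree r. coeff r i * \<theta> ^ i)"
    using r(2) by (simp add: poly_altdef)
  also have "\<dots> = (\<Sum>i<?n. coeff r i * \<theta> ^ i)"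
  proof (cases "r = 0")
    case False
    then have "degree r < ?n"
      using r(3) by simp
    then show ?thesis
      by (intro sum.mono_neutral_left) (auto simp: coeff_eq_0)
  qed simp
  also have "\<dots> = (\<Sum>i<?n. c (\<theta> ^ i) * \<theta> ^ i)"
    by (rule sum.cong) (auto simp: c_def the_inv_into_f_f[OF inj_on_powers])
  also have "\<dots> = (\<Sum>b\<in>(\<lambda>i. \<theta> ^ i) ` {..<?n}. c b * b)"
    using sum.reindex[OF inj_on_powers, of "\<lambda>b. c b * b"] by simp
  finally have "z = (\<Sum>b\<in>(\<lambda>i. \<theta> ^ i) ` {..<?n}. c b * b)" .
  moreover have "\<forall>b\<in>(\<lambda>i. \<theta> ^ i) ` {..<?n}. c b \<in> K"
    unfolding c_def using poly_overD[OF r(1)] by blast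
  ultimately show "z \<in> span_over K ((\<lambda>i. \<theta> ^ i) ` {..<?n})"
    unfolding span_over_def by blast
qed

lemma ext_degree_gen_field_insert:
  assumes alg_all: "\<forall>z. algebraic_over K z" and fe: "finite_ext K (gen_field (insert \<theta> K))"
  shows "ext_degree K (gen_field (insert \<theta> K)) = degree (min_poly K \<theta>)"
proof -
  let ?F = "gen_field (insert \<theta> K)" and ?P = "(\<lambda>i. \<theta> ^ i) ` {..<degree (min_poly K \<theta>)}"
  obtain B where B: "is_basis_over K ?F B"
    using fe unfolding finite_ext_def by blast
  have "?P \<subseteq> ?F"
    using gen_field_superset[of "insert \<theta> K"] by (auto intro!: subfield_power[OF subfield_gen_field])
  then have "card ?P \<le> card B"
    using card_le_if_lin_indep_span[OF K basis_span_over(3)[OF K B] _ lin_indep_powers]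
      basis_span_over(1)[OF K B] by simp
  moreover have "card B \<le> card ?P"
    using card_le_if_lin_indep_span[OF K _ basis_span_over(3,2)[OF K B]]
      basis_span_over(4)[OF K B] gen_field_insert_subset_span_powers[OF alg_all] by blast
  ultimately show ?thesis
    using ext_degree_eq_card_basis[OF K B] card_image[OF inj_on_powers] by simp
qed

end

section \<open>Conjugates in a compositum\<close>

lemma subset_galois_closure: "M \<subseteq> galois_closure K M"
proof -
  have "K_embedding K M id"
    unfolding K_embedding_def by simp
  then have "id ` M \<in> {\<sigma> ` M | \<sigma>. K_embedding K M \<sigma>}"
    by blast
  then have "id ` M \<subseteq> \<Union>{\<sigma> ` M | \<sigma>. K_embedding K M \<sigma>}"
    by (rule Union_upper)
  then show ?thesis
    unfolding galois_closure_def using gen_field_superset[of "K \<union> \<Union>{\<sigma> ` M | \<sigma>. K_embedding K M \<sigma>}"]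
    by auto
qed

lemma K_embedding_exists:
  assumes ac: "alg_closed TYPE('a::field)" and K: "is_subfield K" and alg: "\<forall>z. algebraic_over K z"
    and pf: "perfect_field K" and M: "finite_ext K M" and \<alpha>: "(\<alpha>::'a) \<in> M"
    and a: "poly (min_poly K \<alpha>) a = 0"
  obtains \<sigma> where "K_embedding K M \<sigma>" "\<sigma> \<alpha> = a"
proof -
  let ?L = "gen_field (insert \<alpha> K)"
  have L: "is_subfield ?L" and KL: "K \<subseteq> ?L"
    using subfield_gen_field gen_field_superset by blast+
  have algL: "\<forall>z. algebraic_over ?L z"
    using alg algebraic_over_mono[OF _ KL] by blast
  obtain \<sigma>1 where \<sigma>1: "hom_on ?L \<sigma>1" "\<forall>x\<in>K. \<sigma>1 x = x" "\<sigma>1 \<alpha> = a"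
    using hom_on_extend_root[OF K alg a] .
  obtain \<mu> where \<mu>: "gen_field (insert \<mu> K) = M"
    using primitive_element[OF K alg pf ac M] by blast
  have M': "is_subfield M" "K \<subseteq> M"
    using M unfolding finite_ext_def by auto
  then have "?L \<subseteq> M"
    using \<alpha> by (intro gen_field_least) auto
  then have M\<mu>: "M = gen_field (insert \<mu> ?L)"
    using gen_field_insert_eq_superset[OF M'(1) _ KL \<mu>[symmetric]] by blast
  have "degree (map_poly \<sigma>1 (min_poly ?L \<mu>)) > 0"
    using degree_map_hom[OF L \<sigma>1(1) min_poly_over[OF L]] degree_min_poly_pos[OF L] algL by simp
  then obtain \<mu>' where "poly (map_poly \<sigma>1 (min_poly ?L \<mu>)) \<mu>' = 0"
    using alg_closedD[OF ac] by blast
  then obtain \<sigma> where \<sigma>: "hom_on (gen_field (insert \<mu> ?L)) \<sigma>" "\<forall>x\<in>?L. \<sigma> x = \<sigma>1 x"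
    by (rule hom_on_extend[OF L algL \<sigma>1(1)])
  note \<sigma> = \<sigma>[folded M\<mu>]
  have "K_embedding K M \<sigma>"
    using \<sigma> \<sigma>1(2) KL unfolding K_embedding_def hom_on_def by (simp add: subset_eq)
  moreover have "\<sigma> \<alpha> = a"
    using \<sigma>(2) \<sigma>1(3) gen_field_superset[of "insert \<alpha> K"] by simp
  ultimately show ?thesis
    using that by blast
qed

lemma root_in_galois_closure:
  assumes "alg_closed TYPE('a::field)" "is_subfield K" "\<forall>z. algebraic_over K z" "perfect_field K"
    and "finite_ext K M" "(\<alpha>::'a) \<in> M" "poly (min_poly K \<alpha>) a = 0"
  shows "a \<in> galois_closure K M"
proof -
  obtain \<sigma> where "K_embedding K M \<sigma>" "\<sigma> \<alpha> = a"
    using K_embedding_exists[OF assms] .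
  then have "\<sigma> ` M \<in> {\<sigma> ` M | \<sigma>. K_embedding K M \<sigma>}" "a \<in> \<sigma> ` M"
    using assms(6) by auto
  then have "a \<in> \<Union>{\<sigma> ` M | \<sigma>. K_embedding K M \<sigma>}"
    by (rule UnionI)
  then show ?thesis
    unfolding galois_closure_def
    using gen_field_superset[of "K \<union> \<Union>{\<sigma> ` M | \<sigma>. K_embedding K M \<sigma>}"] by blast
qed

lemma min_poly_eq_if_roots_in:
  assumes ac: "alg_closed TYPE('a::field)" and K: "is_subfield K" and E: "is_subfield E"
    and KE: "K \<subseteq> E" and F: "is_subfield F" and EF: "E \<inter> F \<subseteq> K"
    and alg: "algebraic_over K (\<theta>::'a)" and roots: "\<And>t. poly (min_poly K \<theta>) t = 0 \<Longrightarrow> t \<in> F"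
  shows "min_poly E \<theta> = min_poly K \<theta>"
proof -
  have algE: "algebraic_over E \<theta>"
    using algebraic_over_mono[OF alg KE] .
  have "min_poly E \<theta> dvd min_poly K \<theta>"
    using min_poly_dvd[OF E algE poly_over_mono[OF min_poly_over[OF K alg] KE] min_poly_root[OF K alg]] .
  \<comment> \<open>all roots of \<open>min_poly E \<theta>\<close> lie in \<open>F\<close>, so its coefficients lie in \<open>E \<inter> F \<subseteq> K\<close>\<close>
  then have "r \<in> F" if "poly (min_poly E \<theta>) r = 0" for r
    using that roots by (metis dvd_def mult_zero_left poly_mult)
  then have "poly_over F (min_poly E \<theta>)"
    by (rule poly_over_if_roots_in[OF ac F min_poly_monic[OF E algE]])
  then have "poly_over K (min_poly E \<theta>)"
    using min_poly_over[OF E algE] EF unfolding poly_over_def by blast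
  then show ?thesis
    using min_poly_eq_if_poly_over[OF K E KE alg] by blast
qed

lemma mem_simple_ext_inter:
  assumes M: "is_subfield M" and N: "is_subfield N" and MN: "M \<subseteq> N"
    and alg: "\<forall>z. algebraic_over M z" and eq: "min_poly N \<theta> = min_poly M \<theta>"
    and y: "y \<in> N" "y \<in> gen_field (insert \<theta> M)"
  shows "y \<in> M"
proof -
  have alg\<theta>: "algebraic_over M \<theta>"
    using alg by blast
  obtain p where p: "poly_over M p" "y = poly p \<theta>"
    using y(2) unfolding gen_field_insert_eq_polys[OF M alg] by blast
  define r where "r = p mod min_poly M \<theta>"
  have r: "poly_over M r" "poly r \<theta> = y" "r = 0 \<or> degree r < degree (min_poly M \<theta>)"
    using poly_mod_min_poly[OF M alg\<theta> p(1)] p(2) unfolding r_def by auto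
  \<comment> \<open>\<open>r - y\<close> lies over \<open>N\<close>, vanishes at \<open>\<theta>\<close>, and has degree below that of \<open>min_poly N \<theta>\<close>\<close>
  have "r - [:y:] = 0"
  proof (rule ccontr)
    assume nz: "r - [:y:] \<noteq> 0"
    have "poly_over N (r - [:y:])"
      using poly_over_mono[OF r(1) MN] y(1) N by (intro poly_over_diff poly_over_const)
    then have "degree (min_poly N \<theta>) \<le> degree (r - [:y:])"
      using min_poly_minimal[OF N algebraic_over_mono[OF alg\<theta> MN] nz] r(2) by simp
    moreover have "degree (r - [:y:]) \<le> max (degree r) 0"
      using degree_diff_le_max[of r "[:y:]"] by simp
    ultimately show False
      using r(3) eq degree_min_poly_pos[OF M alg\<theta>] by auto
  qed
  then have "y = coeff r 0"
    by simp
  then show ?thesis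
    using poly_overD[OF r(1)] by simp
qed

text \<open>Below \<open>K(\<gamma>) = K(\<alpha>)(\<theta>)\<close>, with \<open>\<alpha> = p\<^sub>\<alpha>(\<gamma>)\<close> and \<open>\<theta> = p\<^sub>\<theta>(\<gamma>)\<close> for polynomials \<open>p\<^sub>\<alpha>, p\<^sub>\<theta>\<close>
  over \<open>K\<close>. A conjugate \<open>\<beta>\<close> of \<open>\<gamma>\<close> is determined by its coordinates \<open>(p\<^sub>\<alpha>(\<beta>), p\<^sub>\<theta>(\<beta>))\<close>, which are
  conjugates of \<open>\<alpha>\<close> and \<open>\<theta>\<close>.\<close>

lemma conjugate_eq_coordinate_expr:
  assumes K: "is_subfield K" and alg: "\<forall>z. algebraic_over K z"
    and \<gamma>: "gen_field (insert \<gamma> K) = gen_field (insert \<theta> (gen_field (insert \<alpha> K)))"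
    and p\<alpha>: "poly_over K p\<alpha>" "\<alpha> = poly p\<alpha> \<gamma>" and p\<theta>: "poly_over K p\<theta>" "\<theta> = poly p\<theta> \<gamma>"
  shows "\<exists>qs n. (\<forall>i. poly_over K (qs i)) \<and>
    (\<forall>\<beta>. poly (min_poly K \<gamma>) \<beta> = 0 \<longrightarrow> \<beta> = (\<Sum>i\<le>n. poly (qs i) (poly p\<alpha> \<beta>) * poly p\<theta> \<beta> ^ i))"
proof -
  let ?L = "gen_field (insert \<alpha> K)"
  have L: "is_subfield ?L" and KL: "K \<subseteq> ?L"
    using subfield_gen_field gen_field_superset by blast+
  have algL: "\<forall>z. algebraic_over ?L z"
    using alg algebraic_over_mono[OF _ KL] by blast
  have "\<gamma> \<in> gen_field (insert \<theta> ?L)"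
    using \<gamma> gen_field_superset by blast
  then obtain Q where Q: "poly_over ?L Q" "\<gamma> = poly Q \<theta>"
    unfolding gen_field_insert_eq_polys[OF L algL] by blast
  have "\<forall>i. \<exists>q. poly_over K q \<and> coeff Q i = poly q \<alpha>"
    using poly_overD[OF Q(1)] unfolding gen_field_insert_eq_polys[OF K alg] by blast
  then obtain qs where qs: "\<And>i. poly_over K (qs i)" "\<And>i. coeff Q i = poly (qs i) \<alpha>"
    by metis
  define P where "P = (\<Sum>i\<le>degree Q. pcompose (qs i) p\<alpha> * p\<theta> ^ i) - [:0, 1:]"
  have PK: "poly_over K P"
    unfolding P_def using K qs(1) p\<alpha>(1) p\<theta>(1)
    by (intro poly_over_diff poly_over_sum poly_over_mult poly_over_pcompose poly_over_power poly_over_X)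
  have "poly P \<gamma> = (\<Sum>i\<le>degree Q. poly (qs i) \<alpha> * \<theta> ^ i) - \<gamma>"
    unfolding P_def using p\<alpha>(2) p\<theta>(2) by (simp add: poly_sum poly_pcompose)
  also have "\<dots> = poly Q \<theta> - \<gamma>"
    using qs(2) by (simp add: poly_altdef)
  finally have "poly P \<gamma> = 0"
    using Q(2) by simp
  have "\<beta> = (\<Sum>i\<le>degree Q. poly (qs i) (poly p\<alpha> \<beta>) * poly p\<theta> \<beta> ^ i)"
    if "poly (min_poly K \<gamma>) \<beta> = 0" for \<beta>
  proof -
    have "poly P \<beta> = 0"
      using poly_eq_0_at_conjugate[OF K _ PK \<open>poly P \<gamma> = 0\<close> that] alg by blast
    then show ?thesis
      unfolding P_def by (simp add: poly_sum poly_pcompose)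
  qed
  then show ?thesis
    using qs(1) by blast
qed

lemma conjugate_exists:
  assumes K: "is_subfield K" and alg: "\<forall>z. algebraic_over K z"
    and \<gamma>: "gen_field (insert \<gamma> K) = gen_field (insert \<theta> (gen_field (insert \<alpha> K)))"
    and p\<alpha>: "poly_over K p\<alpha>" "\<alpha> = poly p\<alpha> \<gamma>" and p\<theta>: "poly_over K p\<theta>" "\<theta> = poly p\<theta> \<gamma>"
    and h: "min_poly (gen_field (insert \<alpha> K)) \<theta> = min_poly K \<theta>"
    and a: "poly (min_poly K \<alpha>) a = 0" and t: "poly (min_poly K \<theta>) t = 0"
  obtains \<beta> where "poly (min_poly K \<gamma>) \<beta> = 0" "poly p\<alpha> \<beta> = a" "poly p\<theta> \<beta> = t"
proof -
  let ?L = "gen_field (insert \<alpha> K)" and ?L' = "gen_field (insert \<gamma> K)"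
  have L: "is_subfield ?L" and KL: "K \<subseteq> ?L" and \<alpha>L: "\<alpha> \<in> ?L"
    using subfield_gen_field gen_field_superset by blast+
  have algL: "\<forall>z. algebraic_over ?L z"
    using alg algebraic_over_mono[OF _ KL] by blast
  obtain \<sigma>1 where \<sigma>1: "hom_on ?L \<sigma>1" "\<forall>x\<in>K. \<sigma>1 x = x" "\<sigma>1 \<alpha> = a"
    using hom_on_extend_root[OF K alg a] .
  have "map_poly \<sigma>1 (min_poly ?L \<theta>) = min_poly K \<theta>"
    unfolding h using map_hom_fix[OF L \<sigma>1(1) KL \<sigma>1(2) min_poly_over[OF K]] alg by blast
  then have "poly (map_poly \<sigma>1 (min_poly ?L \<theta>)) t = 0"
    using t by simp
  then obtain \<sigma> where \<sigma>: "hom_on (gen_field (insert \<theta> ?L)) \<sigma>" "\<forall>x\<in>?L. \<sigma> x = \<sigma>1 x" "\<sigma> \<theta> = t"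
    by (rule hom_on_extend[OF L algL \<sigma>1(1)])
  note \<sigma> = \<sigma>[folded \<gamma>]
  have \<sigma>K: "\<forall>x\<in>K. \<sigma> x = x"
    using \<sigma>(2) \<sigma>1(2) KL by auto
  have \<gamma>L': "\<gamma> \<in> ?L'" and KL': "K \<subseteq> ?L'"
    using gen_field_superset[of "insert \<gamma> K"] by auto
  have \<sigma>_poly: "\<sigma> (poly p \<gamma>) = poly p (\<sigma> \<gamma>)" if "poly_over K p" for p
    using poly_hom_fix[OF subfield_gen_field \<sigma>(1) KL' \<sigma>K that \<gamma>L'] .
  show ?thesis
  proof (rule that)
    have "algebraic_over K \<gamma>"
      using alg by blast
    then have "\<sigma> (poly (min_poly K \<gamma>) \<gamma>) = poly (min_poly K \<gamma>) (\<sigma> \<gamma>)"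
      using \<sigma>_poly[OF min_poly_over[OF K]] by blast
    then show "poly (min_poly K \<gamma>) (\<sigma> \<gamma>) = 0"
      using min_poly_root[OF K \<open>algebraic_over K \<gamma>\<close>] hom_0[OF subfield_gen_field \<sigma>(1)] by simp
    show "poly p\<alpha> (\<sigma> \<gamma>) = a"
      using \<sigma>_poly[OF p\<alpha>(1)] p\<alpha>(2) \<sigma>(2) \<sigma>1(3) \<alpha>L by simp
    show "poly p\<theta> (\<sigma> \<gamma>) = t"
      using \<sigma>_poly[OF p\<theta>(1)] p\<theta>(2) \<sigma>(3) by simp
  qed
qed

lemma conjugate_image_is_conjugate:
  assumes K: "is_subfield K" and alg: "\<forall>z. algebraic_over K z"
    and p: "poly_over K p" and \<beta>: "poly (min_poly K \<gamma>) \<beta> = 0"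
  shows "poly (min_poly K (poly p \<gamma>)) (poly p \<beta>) = 0"
proof -
  have "poly (pcompose (min_poly K (poly p \<gamma>)) p) \<gamma> = 0"
    using min_poly_root[OF K] alg by (simp add: poly_pcompose)
  then have "poly (pcompose (min_poly K (poly p \<gamma>)) p) \<beta> = 0"
    using poly_eq_0_at_conjugate[OF K _ poly_over_pcompose[OF K min_poly_over[OF K] p] _ \<beta>] alg
    by blast
  then show ?thesis
    by (simp add: poly_pcompose)
qed

lemma conjugate_coordinates_bij:
  assumes K: "is_subfield K" and alg: "\<forall>z. algebraic_over K z"
    and \<gamma>: "gen_field (insert \<gamma> K) = gen_field (insert \<theta> (gen_field (insert \<alpha> K)))"
    and p\<alpha>: "poly_over K p\<alpha>" "\<alpha> = poly p\<alpha> \<gamma>" and p\<theta>: "poly_over K p\<theta>" "\<theta> = poly p\<theta> \<gamma>"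
    and h: "min_poly (gen_field (insert \<alpha> K)) \<theta> = min_poly K \<theta>"
  shows "bij_betw (\<lambda>\<beta>. (poly p\<alpha> \<beta>, poly p\<theta> \<beta>)) {\<beta>. poly (min_poly K \<gamma>) \<beta> = 0}
    ({a. poly (min_poly K \<alpha>) a = 0} \<times> {t. poly (min_poly K \<theta>) t = 0})"
  unfolding bij_betw_def
proof (intro conjI inj_onI antisym subsetI)
  obtain qs n where expr: "\<And>\<beta>. poly (min_poly K \<gamma>) \<beta> = 0 \<Longrightarrow>
      \<beta> = (\<Sum>i\<le>n. poly (qs i) (poly p\<alpha> \<beta>) * poly p\<theta> \<beta> ^ i)"
    using conjugate_eq_coordinate_expr[OF K alg \<gamma> p\<alpha> p\<theta>] by blast
  fix \<beta>1 \<beta>2 assume \<beta>: "\<beta>1 \<in> {\<beta>. poly (min_poly K \<gamma>) \<beta> = 0}" "\<beta>2 \<in> {\<beta>. poly (min_poly K \<gamma>) \<beta> = 0}"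
    and eq: "(poly p\<alpha> \<beta>1, poly p\<theta> \<beta>1) = (poly p\<alpha> \<beta>2, poly p\<theta> \<beta>2)"
  have "\<beta>1 = (\<Sum>i\<le>n. poly (qs i) (poly p\<alpha> \<beta>1) * poly p\<theta> \<beta>1 ^ i)"
    by (rule expr) (use \<beta>(1) in simp)
  also have "\<dots> = (\<Sum>i\<le>n. poly (qs i) (poly p\<alpha> \<beta>2) * poly p\<theta> \<beta>2 ^ i)"
    using eq by simp
  also have "\<dots> = \<beta>2"
    by (rule expr[symmetric]) (use \<beta>(2) in simp)
  finally show "\<beta>1 = \<beta>2" .
next
  fix z assume "z \<in> (\<lambda>\<beta>. (poly p\<alpha> \<beta>, poly p\<theta> \<beta>)) ` {\<beta>. poly (min_poly K \<gamma>) \<beta> = 0}"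
  then obtain \<beta> where \<beta>: "poly (min_poly K \<gamma>) \<beta> = 0" "z = (poly p\<alpha> \<beta>, poly p\<theta> \<beta>)"
    by blast
  then show "z \<in> {a. poly (min_poly K \<alpha>) a = 0} \<times> {t. poly (min_poly K \<theta>) t = 0}"
    using conjugate_image_is_conjugate[OF K alg p\<alpha>(1) \<beta>(1)]
      conjugate_image_is_conjugate[OF K alg p\<theta>(1) \<beta>(1)] p\<alpha>(2) p\<theta>(2) by simp
next
  fix z assume z: "z \<in> {a. poly (min_poly K \<alpha>) a = 0} \<times> {t. poly (min_poly K \<theta>) t = 0}"
  show "z \<in> (\<lambda>\<beta>. (poly p\<alpha> \<beta>, poly p\<theta> \<beta>)) ` {\<beta>. poly (min_poly K \<gamma>) \<beta> = 0}"
  proof (cases z)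
    case (Pair a t)
    then obtain \<beta> where "poly (min_poly K \<gamma>) \<beta> = 0" "poly p\<alpha> \<beta> = a" "poly p\<theta> \<beta> = t"
      using conjugate_exists[OF K alg \<gamma> p\<alpha> p\<theta> h] z by blast
    then show ?thesis
      using Pair by force
  qed
qed

lemma conjugate_mem_if_coordinates_mem:
  assumes K: "is_subfield K" and alg: "\<forall>z. algebraic_over K z"
    and \<gamma>: "gen_field (insert \<gamma> K) = gen_field (insert \<theta> (gen_field (insert \<alpha> K)))"
    and p\<alpha>: "poly_over K p\<alpha>" "\<alpha> = poly p\<alpha> \<gamma>" and p\<theta>: "poly_over K p\<theta>" "\<theta> = poly p\<theta> \<gamma>"
    and E: "is_subfield E" "K \<subseteq> E" and \<beta>: "poly (min_poly K \<gamma>) \<beta> = 0"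
    and coords: "poly p\<alpha> \<beta> \<in> E" "poly p\<theta> \<beta> \<in> E"
  shows "\<beta> \<in> E"
proof -
  obtain qs n where qs: "\<forall>i. poly_over K (qs i)" and expr: "\<forall>\<beta>. poly (min_poly K \<gamma>) \<beta> = 0 \<longrightarrow>
      \<beta> = (\<Sum>i\<le>n. poly (qs i) (poly p\<alpha> \<beta>) * poly p\<theta> \<beta> ^ i)"
    using conjugate_eq_coordinate_expr[OF K alg \<gamma> p\<alpha> p\<theta>] by blast
  have "poly (qs i) (poly p\<alpha> \<beta>) \<in> E" for i
    using poly_in_subfield[OF E(1) poly_over_mono[OF qs[rule_format] E(2)] coords(1)] .
  then have sum_in: "(\<Sum>i\<le>n. poly (qs i) (poly p\<alpha> \<beta>) * poly p\<theta> \<beta> ^ i) \<in> E"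
    using coords(2) by (intro subfield_sum[OF E(1)] subfield_mult[OF E(1)] subfield_power[OF E(1)])
  have "\<beta> = (\<Sum>i\<le>n. poly (qs i) (poly p\<alpha> \<beta>) * poly p\<theta> \<beta> ^ i)"
    using expr \<beta> by blast
  then show "\<beta> \<in> E"
    by (subst \<open>\<beta> = _\<close>) (rule sum_in)
qed

lemma bij_betw_restrict_preimage:
  assumes "bij_betw f A B" "B' \<subseteq> B"
  shows "bij_betw f {x \<in> A. f x \<in> B'} B'"
  using assms unfolding bij_betw_def inj_on_def by auto

lemma card_conjugates_in_simple_ext:
  assumes K: "is_subfield K" and alg: "\<forall>z. algebraic_over K z"
    and \<gamma>: "gen_field (insert \<gamma> K) = gen_field (insert \<theta> (gen_field (insert \<alpha> K)))"
    and h: "min_poly (gen_field (insert \<alpha> K)) \<theta> = min_poly K \<theta>"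
    and M: "is_subfield M" "K \<subseteq> M" "\<alpha> \<in> M"
    and h_roots: "\<And>t. poly (min_poly K \<theta>) t = 0 \<Longrightarrow> t \<in> gen_field (insert \<theta> K)"
    and f_roots: "\<And>a. poly (min_poly K \<alpha>) a = 0 \<Longrightarrow> a \<in> gen_field (insert \<theta> M) \<Longrightarrow> a \<in> M"
  shows "card {\<beta> \<in> gen_field (insert \<theta> M). poly (min_poly K \<gamma>) \<beta> = 0} =
    card {a \<in> M. poly (min_poly K \<alpha>) a = 0} * card {t. poly (min_poly K \<theta>) t = 0}"
proof -
  let ?M' = "gen_field (insert \<theta> M)" and ?L = "gen_field (insert \<alpha> K)"
  let ?A = "{a. poly (min_poly K \<alpha>) a = 0}" and ?H = "{t. poly (min_poly K \<theta>) t = 0}"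
  have M': "is_subfield ?M'" and MM': "M \<subseteq> ?M'" and KM': "K \<subseteq> ?M'"
    using subfield_gen_field gen_field_superset[of "insert \<theta> M"] M(2) by blast+
  have "\<alpha> \<in> ?L" "?L \<subseteq> gen_field (insert \<theta> ?L)" "\<theta> \<in> gen_field (insert \<theta> ?L)"
    using gen_field_superset[of "insert \<alpha> K"] gen_field_superset[of "insert \<theta> ?L"] by blast+
  then have "\<alpha> \<in> gen_field (insert \<gamma> K)" "\<theta> \<in> gen_field (insert \<gamma> K)"
    unfolding \<gamma> by blast+
  then obtain p\<alpha> p\<theta> where p\<alpha>: "poly_over K p\<alpha>" "\<alpha> = poly p\<alpha> \<gamma>" and p\<theta>: "poly_over K p\<theta>" "\<theta> = poly p\<theta> \<gamma>"
    unfolding gen_field_insert_eq_polys[OF K alg] by blast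
  let ?\<Phi> = "\<lambda>\<beta>. (poly p\<alpha> \<beta>, poly p\<theta> \<beta>)"
  have bij: "bij_betw ?\<Phi> {\<beta>. poly (min_poly K \<gamma>) \<beta> = 0} (?A \<times> ?H)"
    using conjugate_coordinates_bij[OF K alg \<gamma> p\<alpha> p\<theta> h] .
  then have coords: "poly p\<alpha> \<beta> \<in> ?A" "poly p\<theta> \<beta> \<in> ?H" if "poly (min_poly K \<gamma>) \<beta> = 0" for \<beta>
    using that unfolding bij_betw_def by auto
  have mem_iff: "\<beta> \<in> ?M' \<longleftrightarrow> poly p\<alpha> \<beta> \<in> M" if \<beta>: "poly (min_poly K \<gamma>) \<beta> = 0" for \<beta>
  proof
    assume "\<beta> \<in> ?M'"
    then show "poly p\<alpha> \<beta> \<in> M"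
      using poly_in_subfield[OF M' poly_over_mono[OF p\<alpha>(1) KM']] f_roots coords(1)[OF \<beta>] by blast
  next
    assume "poly p\<alpha> \<beta> \<in> M"
    moreover have "poly p\<theta> \<beta> \<in> ?M'"
      using h_roots coords(2)[OF \<beta>] gen_field_mono[of "insert \<theta> K" "insert \<theta> M"] M(2) by blast
    ultimately show "\<beta> \<in> ?M'"
      using conjugate_mem_if_coordinates_mem[OF K alg \<gamma> p\<alpha> p\<theta> M' KM' \<beta>] MM' by blast
  qed
  have A_eq: "{\<beta> \<in> ?M'. poly (min_poly K \<gamma>) \<beta> = 0} =
      {\<beta> \<in> {\<beta>. poly (min_poly K \<gamma>) \<beta> = 0}. ?\<Phi> \<beta> \<in> {a \<in> M. a \<in> ?A} \<times> ?H}"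
    using mem_iff coords by blast
  have "{a \<in> M. a \<in> ?A} \<times> ?H \<subseteq> ?A \<times> ?H"
    by blast
  then have "bij_betw ?\<Phi> {\<beta> \<in> ?M'. poly (min_poly K \<gamma>) \<beta> = 0} ({a \<in> M. a \<in> ?A} \<times> ?H)"
    unfolding A_eq by (rule bij_betw_restrict_preimage[OF bij])
  then show ?thesis
    by (simp add: bij_betw_same_card card_cartesian_product)
qed

lemma min_poly_eq_if_disjoint_galois_closure:
  assumes ac: "alg_closed TYPE('a::field)" and K: "is_subfield K" and alg: "\<forall>z. algebraic_over K z"
    and E: "is_subfield E" "K \<subseteq> E" "E \<subseteq> galois_closure K M"
    and disj: "galois_closure K M \<inter> gen_field (insert \<theta> K) \<subseteq> K"
    and h_roots: "\<And>t. poly (min_poly K \<theta>) t = 0 \<Longrightarrow> t \<in> gen_field (insert (\<theta>::'a) K)"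
  shows "min_poly E \<theta> = min_poly K \<theta>"
proof (rule min_poly_eq_if_roots_in[OF ac K E(1,2) subfield_gen_field _ _ h_roots])
  show "E \<inter> gen_field (insert \<theta> K) \<subseteq> K"
    using E(3) disj by blast
  show "algebraic_over K \<theta>"
    using alg by blast
qed

lemma root_in_simple_ext_galois_closure:
  assumes ac: "alg_closed TYPE('a::field)" and K: "is_subfield K" and alg: "\<forall>z. algebraic_over K z"
    and pf: "perfect_field K" and M: "finite_ext K M" and \<alpha>: "(\<alpha>::'a) \<in> M"
    and disj: "galois_closure K M \<inter> gen_field (insert \<theta> K) \<subseteq> K"
    and h_roots: "\<And>t. poly (min_poly K \<theta>) t = 0 \<Longrightarrow> t \<in> gen_field (insert \<theta> K)"
    and a: "poly (min_poly K \<alpha>) a = 0" "a \<in> gen_field (insert \<theta> M)"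
  shows "a \<in> M"
proof -
  let ?N = "galois_closure K M"
  have N: "is_subfield ?N"
    unfolding galois_closure_def by (rule subfield_gen_field)
  have M': "is_subfield M" "K \<subseteq> M"
    using M unfolding finite_ext_def by auto
  have MN: "M \<subseteq> ?N"
    by (rule subset_galois_closure)
  \<comment> \<open>\<open>\<theta>\<close> keeps its minimal polynomial over \<open>M \<subseteq> N\<close>, as \<open>N\<close> meets \<open>K(\<theta>)\<close> only in \<open>K\<close>\<close>
  have "min_poly ?N \<theta> = min_poly M \<theta>"
    using min_poly_eq_if_disjoint_galois_closure[OF ac K alg N _ _ disj h_roots]
      min_poly_eq_if_disjoint_galois_closure[OF ac K alg M' MN disj h_roots] M'(2) MN by auto
  moreover have "\<forall>z. algebraic_over M z"
    using alg algebraic_over_mono[OF _ M'(2)] by blast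
  ultimately show ?thesis
    using mem_simple_ext_inter[OF M'(1) N MN _ _ root_in_galois_closure[OF ac K alg pf M \<alpha> a(1)] a(2)]
    by simp
qed

lemma root_capacity_primitive:
  assumes "\<exists>\<alpha>. gen_field (insert \<alpha> K) = L"
  shows "\<exists>\<alpha>. gen_field (insert \<alpha> K) = L \<and>
    (\<forall>M. root_capacity K M L = card {\<beta> \<in> M. poly (min_poly K \<alpha>) \<beta> = 0})"
proof -
  define \<alpha> where "\<alpha> = (SOME \<alpha>. \<alpha> \<in> L \<and> gen_field (insert \<alpha> K) = L)"
  have "\<exists>\<alpha>. \<alpha> \<in> L \<and> gen_field (insert \<alpha> K) = L"
    using assms gen_field_superset by blast
  then have "\<alpha> \<in> L \<and> gen_field (insert \<alpha> K) = L"
    unfolding \<alpha>_def by (rule someI_ex)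
  moreover have "root_capacity K M L = card {\<beta> \<in> M. poly (min_poly K \<alpha>) \<beta> = 0}" for M
    unfolding root_capacity_def Let_def \<alpha>_def ..
  ultimately show ?thesis
    by blast
qed

lemma galois_ext_gen_field_insert:
  assumes ac: "alg_closed TYPE('a::field)" and K: "is_subfield K" and alg: "\<forall>z. algebraic_over K z"
    and gal: "galois_ext K (gen_field (insert (\<theta>::'a) K))"
  shows "card {t. poly (min_poly K \<theta>) t = 0} = ext_degree K (gen_field (insert \<theta> K))"
    and "\<And>t. poly (min_poly K \<theta>) t = 0 \<Longrightarrow> t \<in> gen_field (insert \<theta> K)"
proof -
  have \<theta>: "\<theta> \<in> gen_field (insert \<theta> K)"
    using gen_field_superset by blast
  have "rsquarefree (min_poly K \<theta>)" and fe: "finite_ext K (gen_field (insert \<theta> K))"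
    using gal \<theta> unfolding galois_ext_def by blast+
  then show "card {t. poly (min_poly K \<theta>) t = 0} = ext_degree K (gen_field (insert \<theta> K))"
    using card_roots_rsquarefree[OF ac] ext_degree_gen_field_insert[OF K _ alg fe] alg by simp
  show "t \<in> gen_field (insert \<theta> K)" if "poly (min_poly K \<theta>) t = 0" for t
    using gal \<theta> that unfolding galois_ext_def by blast
qed

lemma compositum_primitive_element:
  assumes "is_subfield K" "\<forall>z. algebraic_over K z" "alg_closed TYPE('a::field)" "perfect_field K"
    and "finite_ext K L" "L = gen_field (insert (\<alpha>::'a) K)" "F = gen_field (insert \<theta> K)"
  shows "\<exists>\<gamma>. gen_field (insert \<gamma> K) = compositum L F"
proof -
  have "compositum L F = gen_field (insert \<theta> (insert \<alpha> K))"
    using assms(5-7) compositum_gen_field_insert[of L K \<theta>] gen_field_insert_gen_field[of \<theta> "insert \<alpha> K"]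
    unfolding finite_ext_def by simp
  then show ?thesis
    using primitive_element_pair[OF assms(1-3) rsquarefree_min_poly_perfect[OF assms(1,4)], of \<alpha> \<theta>]
      assms(2) by auto
qed

theorem mainTheorem5:
  fixes K L M F :: "'a::field set" and d :: nat
  assumes "alg_closed TYPE('a)"
    and "\<forall>x::'a. algebraic_over K x"
    and "is_subfield K" and "perfect_field K"
    and "finite_ext K L" and "finite_ext K M" and "L \<subseteq> M"
    and "galois_ext K F" and "d = ext_degree K F"
    and "strong_cluster_magnification K M F (compositum M F)"
    and "strong_cluster_magnification K L F (compositum L F)"
  shows "root_capacity K (compositum M F) (compositum L F) = d * root_capacity K M L"
proof -
  note ac = assms(1) and alg = assms(2) and K = assms(3) and pf = assms(4)
  have M: "is_subfield M" "K \<subseteq> M" and F: "finite_ext K F"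
    using assms(6,8) unfolding finite_ext_def galois_ext_def by auto
  obtain \<theta> where F\<theta>: "F = gen_field (insert \<theta> K)"
    using primitive_element[OF K alg pf ac F] by blast
  note h = galois_ext_gen_field_insert[OF ac K alg assms(8)[unfolded F\<theta>]]
  obtain \<alpha> where \<alpha>: "L = gen_field (insert \<alpha> K)"
    and \<rho>L: "\<forall>M. root_capacity K M L = card {\<beta> \<in> M. poly (min_poly K \<alpha>) \<beta> = 0}"
    using root_capacity_primitive[OF primitive_element[OF K alg pf ac assms(5)]] by blast
  obtain \<gamma> where \<gamma>: "gen_field (insert \<gamma> K) = compositum L F"
    and \<rho>L': "\<forall>M. root_capacity K M (compositum L F) = card {\<beta> \<in> M. poly (min_poly K \<gamma>) \<beta> = 0}"
    using root_capacity_primitive[OF compositum_primitive_element[OF K alg ac pf assms(5) \<alpha> F\<theta>]] by blast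
  have disj: "galois_closure K M \<inter> gen_field (insert \<theta> K) \<subseteq> K"
    using assms(10) F\<theta> unfolding strong_cluster_magnification_def by blast
  have \<alpha>M: "\<alpha> \<in> M"
    using \<alpha> assms(7) gen_field_superset[of "insert \<alpha> K"] by blast
  have "min_poly L \<theta> = min_poly K \<theta>"
    using min_poly_eq_if_disjoint_galois_closure[OF ac K alg _ _ _ disj h(2)] assms(5,7)
      subset_galois_closure[of M K] unfolding finite_ext_def by blast
  from card_conjugates_in_simple_ext[OF K alg _ this[unfolded \<alpha>] M \<alpha>M h(2)
      root_in_simple_ext_galois_closure[OF ac K alg pf assms(6) \<alpha>M disj h(2)]]
  have "card {\<beta> \<in> compositum M F. poly (min_poly K \<gamma>) \<beta> = 0} = card {a \<in> M. poly (min_poly K \<alpha>) a = 0} * d"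
    using \<gamma> compositum_gen_field_insert[OF M] compositum_gen_field_insert[of L K \<theta>] assms(5,9) h(1)
    unfolding F\<theta> \<alpha> finite_ext_def by simp
  then show ?thesis
    using \<rho>L \<rho>L' by simp
qed

end
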